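(* Let $\mathcal A$ be a well-structured abstract domain, and let monotone abstract operators $\llbracket e\rrbracket^\#:\mathcal A\to\mathcal A$ be given for each basic command $e$, extended inductively to all programs as described in the context. (1) If $\llbracket e\rrbracket^\#$ is a sound abstraction of $\llbracket e\rrbracket$ for every basic command $e$, then $\llbracket S\rrbracket^\#$ is a sound abstraction of $\llbracket S\rrbracket$ for every program $S$. (2) If $\llbracket e\rrbracket^\#$ is a complete abstraction of $\llbracket e\rrbracket$ for every basic command $e$, then $\llbracket S\rrbracket^\#$ is a complete abstraction of $\llbracket S\rrbracket$ for every program $S$.
   Context: Fix a finite set $V$ of quantum variables, each a qubit with state space $\mathcal H_q\cong\mathbb C^2$; for $W\subseteq V$, $\mathcal H_W=\bigotimes_{q\in W}\mathcal H_q$. Operators and subspaces on $\mathcal H_W$ are identified with their cylindrical extensions to $\mathcal H_V$, and a subspace is identified with its orthogonal projector; $P^\perp$ is the orthocomplement. $\mathcal D(\mathcal H_V)$ is the set of partial density operators (positive, trace $\le1$). Programs: $S::=\mathbf{skip}\mid \bar q:=|0\rangle\mid \bar q\mathrel{*{=}}U\mid \mathbf{assert}\ P[\bar q]\mid S_0;S_1\mid \mathbf{if}\ P[\bar q]\ \mathbf{then}\ S_1\ \mathbf{else}\ S_0\ \mathbf{end}\mid\mathbf{while}\ P[\bar q]\ \mathbf{do}\ S\ \mathbf{end}$, with $\bar q=q_1,\dots,q_t$ distinct variables, $U$ unitary on $\mathcal H_{\bar q}$, $P$ a subspace of $\mathcal H_{\bar q}$; the first four forms are the basic commands. Semantics $\llbracket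 S\rrbracket:\mathcal D(\mathcal H_V)\to\mathcal D(\mathcal H_V)$: $\llbracket\mathbf{skip}\rrbracket(\rho)=\rho$; $\llbracket\bar q:=|0\rangle\rrbracket(\rho)=\sum_{i=0}^{2^t-1}|0\rangle_{\bar q}\langle i|\rho|i\rangle_{\bar q}\langle0|$; $\llbracket\bar q\mathrel{*{=}}U\rrbracket(\rho)=U\rho U^\dagger$; $\llbracket\mathbf{assert}\ P[\bar q]\rrbracket(\rho)=P\rho P$; $\llbracket S_0;S_1\rrbracket=\llbracket S_1\rrbracket\circ\llbracket S_0\rrbracket$; $\llbracket\mathbf{if}\ P[\bar q]\ \mathbf{then}\ S_1\ \mathbf{else}\ S_0\ \mathbf{end}\rrbracket(\rho)=\llbracket\mathbf{assert}\ P[\bar q];S_1\rrbracket(\rho)+\llbracket\mathbf{assert}\ P^\perp[\bar q];S_0\rrbracket(\rho)$; $\llbracket\mathbf{while}\ P[\bar q]\ \mathbf{do}\ S\ \mathbf{end}\rrbracket(\rho)=\sum_{i\ge0}\llbracket(\mathbf{assert}\ P[\bar q];S)^i;\mathbf{assert}\ P^\perp[\bar q]\rrbracket(\rho)$, where $T^i$ is $i$-fold sequential composition ($T^0=\mathbf{skip}$). The concrete domain is $\mathcal Q=2^{\mathcal D(\mathcal H_V)}$ ordered by inclusion, and $\llbracket S\rrbracket(R)=\{\llbracket S\rrbracket(\rho):\rho\in R\}$. A pair of monotone maps $(\alpha,\gamma)$ between posets is a Galois connection if $c\le\gamma(a)\iff\alpha(c)\le a$, and a Galois embedding if moreover $\alpha\circ\gamma=\mathrm{id}$.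 A complete lattice $(\mathcal A,\le_{\mathcal A},\vee,\wedge,\bot,\top)$ with monotone $\alpha:\mathcal Q\to\mathcal A$, $\gamma:\mathcal A\to\mathcal Q$ is a well-structured abstract domain if (a) $(\alpha,\gamma)$ is a Galois embedding, and (b) for any family $\rho_i\in\mathcal D(\mathcal H_V)$ and reals $x_i>0$ with $\sum_i x_i\rho_i\in\mathcal D(\mathcal H_V)$, $\alpha(\sum_i x_i\rho_i)=\bigvee_i\alpha(\rho_i)$, where $\alpha(\rho)=\alpha(\{\rho\})$. For $f:\mathcal Q\to\mathcal Q$, an operator $f^\#:\mathcal A\to\mathcal A$ is a sound abstraction of $f$ if $\alpha(f(R))\le_{\mathcal A}f^\#(\alpha(R))$ for all $R\in\mathcal Q$, and a complete abstraction if equality holds for all $R$. Given monotone $\llbracket e\rrbracket^\#$ for basic commands $e$, the operators $\llbracket S\rrbracket^\#$ for composite programs are defined inductively: $\llbracket S_0;S_1\rrbracket^\#=\llbracket S_1\rrbracket^\#\circ\llbracket S_0\rrbracket^\#$; $\llbracket\mathbf{if}\ P[\bar q]\ \mathbf{then}\ S_1\ \mathbf{else}\ S_0\ \mathbf{end}\rrbracket^\#(a)=\llbracket\mathbf{assert}\ P[\bar q];S_1\rrbracket^\#(a)\vee\llbracket\mathbf{assert}\ P^\perp[\bar q];S_0\rrbracket^\#(a)$; $\llbracket\mathbf{while}\ P[\bar q]\ \mathbf{do}\ S\ \mathbf{end}\rrbracket^\#(a)=\bigvee_{i\ge0}\llbracket(\mathbf{assert}\ P[\bar q];S)^i;\mathbf{assert}\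 P^\perp[\bar q]\rrbracket^\#(a)$. *)

theory Defs
  imports "HOL-Analysis.Infinite_Sum" "Jordan_Normal_Form.Schur_Decomposition"
begin

text \<open>The quantum variables are the qubits 0,...,n-1 (V = {0..<n}).  H_V = C^(2^n); the
computational basis vector with index i (i < 2^n) assigns to qubit q the bit (i div 2^q) mod 2.\<close>

definition qdim :: "nat \<Rightarrow> nat" where "qdim n = 2 ^ n"

definition qbit :: "nat \<Rightarrow> nat \<Rightarrow> nat" where "qbit i q = (i div 2 ^ q) mod 2"

text \<open>Local index of a global basis index w.r.t. the register qs = q_1,...,q_t
  (q_1 is the least significant local bit).\<close>
definition loc_idx :: "nat list \<Rightarrow> nat \<Rightarrow> nat" where
  "loc_idx qs i = (\<Sum>k<length qs. qbit i (qs ! k) * 2 ^ k)"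

text \<open>Cylindrical extension A (x) I_{V - qs} of an operator A on H_qs to H_V.\<close>
definition cyl :: "nat \<Rightarrow> nat list \<Rightarrow> complex mat \<Rightarrow> complex mat" where
  "cyl n qs A = mat (qdim n) (qdim n)
     (\<lambda>(i, j). if (\<forall>q<n. q \<notin> set qs \<longrightarrow> qbit i q = qbit j q)
               then A $$ (loc_idx qs i, loc_idx qs j) else 0)"

definition is_projector :: "nat \<Rightarrow> complex mat \<Rightarrow> bool" where
  "is_projector m P \<longleftrightarrow> P \<in> carrier_mat m m \<and> P * P = P \<and> mat_adjoint P = P"

definition is_unitary :: "nat \<Rightarrow> complex mat \<Rightarrow> bool" where
  "is_unitary m U \<longleftrightarrow> U \<in> carrier_mat m m \<and> U * mat_adjoint U = 1\<^sub>m m"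

text \<open>Orthocomplement of a subspace (given by its projector) of H_qs.\<close>
definition ortho :: "nat list \<Rightarrow> complex mat \<Rightarrow> complex mat" where
  "ortho qs P = 1\<^sub>m (2 ^ length qs) - P"

definition positive_op :: "nat \<Rightarrow> complex mat \<Rightarrow> bool" where
  "positive_op d A \<longleftrightarrow> A \<in> carrier_mat d d \<and>
     (\<forall>v \<in> carrier_vec d. let z = (\<Sum>i<d. cnj (vec_index v i) * vec_index (A *\<^sub>v v) i) in Im z = 0 \<and> 0 \<le> Re z)"

definition pdo :: "nat \<Rightarrow> complex mat set" where
  "pdo n = {\<rho>. positive_op (qdim n) \<rho> \<and> Re (\<Sum>i<qdim n. \<rho> $$ (i, i)) \<le> 1}"

definition mat_fsum :: "nat \<Rightarrow> (nat \<Rightarrow> complex mat) \<Rightarrow> nat \<Rightarrow> complex mat" where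
  "mat_fsum d M K = mat d d (\<lambda>(r, c). \<Sum>k<K. M k $$ (r, c))"

definition mat_suminf :: "nat \<Rightarrow> (nat \<Rightarrow> complex mat) \<Rightarrow> complex mat" where
  "mat_suminf d M = mat d d (\<lambda>(r, c). \<Sum>k. M k $$ (r, c))"

datatype bcmd =
    Skip
  | Init "nat list"                 (* qs := |0> *)
  | Apply "nat list" "complex mat"  (* qs *= U *)
  | Assert "nat list" "complex mat" (* assert P[qs], P given by its projector on H_qs *)

datatype prog =
    Basic bcmd
  | Seq prog prog
  | If "nat list" "complex mat" prog prog (* if P[qs] then S1 else S0 end *)
  | While "nat list" "complex mat" prog

definition wf_reg :: "nat \<Rightarrow> nat list \<Rightarrow> bool" where
  "wf_reg n qs \<longleftrightarrow> distinct qs \<and> set qs \<subseteq> {..<n}"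

fun wf_bcmd :: "nat \<Rightarrow> bcmd \<Rightarrow> bool" where
  "wf_bcmd n Skip = True"
| "wf_bcmd n (Init qs) = wf_reg n qs"
| "wf_bcmd n (Apply qs U) = (wf_reg n qs \<and> is_unitary (2 ^ length qs) U)"
| "wf_bcmd n (Assert qs P) = (wf_reg n qs \<and> is_projector (2 ^ length qs) P)"

fun wf_prog :: "nat \<Rightarrow> prog \<Rightarrow> bool" where
  "wf_prog n (Basic e) = wf_bcmd n e"
| "wf_prog n (Seq S0 S1) = (wf_prog n S0 \<and> wf_prog n S1)"
| "wf_prog n (If qs P S1 S0) =
     (wf_reg n qs \<and> is_projector (2 ^ length qs) P \<and> wf_prog n S1 \<and> wf_prog n S0)"
| "wf_prog n (While qs P S) =
     (wf_reg n qs \<and> is_projector (2 ^ length qs) P \<and> wf_prog n S)"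

definition ket0bra :: "nat \<Rightarrow> nat \<Rightarrow> complex mat" where
  "ket0bra m i = mat m m (\<lambda>(r, c). if r = 0 \<and> c = i then 1 else 0)"

fun bsem :: "nat \<Rightarrow> bcmd \<Rightarrow> complex mat \<Rightarrow> complex mat" where
  "bsem n Skip \<rho> = \<rho>"
| "bsem n (Init qs) \<rho> =
     mat_fsum (qdim n)
       (\<lambda>i. cyl n qs (ket0bra (2 ^ length qs) i) * \<rho> *
            mat_adjoint (cyl n qs (ket0bra (2 ^ length qs) i)))
       (2 ^ length qs)"
| "bsem n (Apply qs U) \<rho> = cyl n qs U * \<rho> * mat_adjoint (cyl n qs U)"
| "bsem n (Assert qs P) \<rho> = cyl n qs P * \<rho> * cyl n qs P"

primrec csem :: "prog \<Rightarrow> nat \<Rightarrow> complex mat \<Rightarrow> complex mat" where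
  "csem (Basic e) n = bsem n e"
| "csem (Seq S0 S1) n = csem S1 n \<circ> csem S0 n"
| "csem (If qs P S1 S0) n =
     (\<lambda>\<rho>. csem S1 n (bsem n (Assert qs P) \<rho>) + csem S0 n (bsem n (Assert qs (ortho qs P)) \<rho>))"
| "csem (While qs P S) n =
     (\<lambda>\<rho>. mat_suminf (qdim n)
        (\<lambda>i. bsem n (Assert qs (ortho qs P)) (((csem S n \<circ> bsem n (Assert qs P)) ^^ i) \<rho>)))"

text \<open>For while loops, T^0 = skip contributes the abstract skip operator, and T^i (i >= 1)
  is the i-fold composition of T = (assert P; S).\<close>
primrec asem :: "(bcmd \<Rightarrow> 'a::complete_lattice \<Rightarrow> 'a) \<Rightarrow> prog \<Rightarrow> 'a \<Rightarrow> 'a" where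
  "asem ab (Basic e) = ab e"
| "asem ab (Seq S0 S1) = asem ab S1 \<circ> asem ab S0"
| "asem ab (If qs P S1 S0) =
     (\<lambda>a. sup (asem ab S1 (ab (Assert qs P) a)) (asem ab S0 (ab (Assert qs (ortho qs P)) a)))"
| "asem ab (While qs P S) =
     (\<lambda>a. SUP i. ab (Assert qs (ortho qs P))
                 ((if i = 0 then ab Skip else (asem ab S \<circ> ab (Assert qs P)) ^^ i) a))"

text \<open>Concrete domain Q = subsets of pdo n, ordered by inclusion.\<close>
definition well_structured ::
  "nat \<Rightarrow> (complex mat set \<Rightarrow> 'a::complete_lattice) \<Rightarrow> ('a \<Rightarrow> complex mat set) \<Rightarrow> bool" where
  "well_structured n \<alpha> \<gamma> \<longleftrightarrow>
     (\<forall>R R'. R \<subseteq> R' \<and> R' \<subseteq> pdo n \<longrightarrow> \<alpha> R \<le> \<alpha> R') \<and>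
     (\<forall>a. \<gamma> a \<subseteq> pdo n) \<and> mono \<gamma> \<and>
     (\<forall>R a. R \<subseteq> pdo n \<longrightarrow> (R \<subseteq> \<gamma> a \<longleftrightarrow> \<alpha> R \<le> a)) \<and>
     (\<forall>a. \<alpha> (\<gamma> a) = a) \<and>
     (\<forall>(I :: nat set) (\<rho> :: nat \<Rightarrow> complex mat) (x :: nat \<Rightarrow> real) S.
        I \<noteq> {} \<and> (\<forall>i\<in>I. \<rho> i \<in> pdo n \<and> x i > 0) \<and> S \<in> pdo n \<and>
        (\<forall>r<qdim n. \<forall>c<qdim n. ((\<lambda>i. complex_of_real (x i) * \<rho> i $$ (r, c)) has_sum S $$ (r, c)) I)
        \<longrightarrow> \<alpha> {S} = (SUP i\<in>I. \<alpha> {\<rho> i}))"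

definition sound_abs ::
  "nat \<Rightarrow> (complex mat set \<Rightarrow> 'a::complete_lattice) \<Rightarrow> (complex mat \<Rightarrow> complex mat) \<Rightarrow> ('a \<Rightarrow> 'a) \<Rightarrow> bool" where
  "sound_abs n \<alpha> f fa \<longleftrightarrow> (\<forall>R. R \<subseteq> pdo n \<longrightarrow> \<alpha> (f ` R) \<le> fa (\<alpha> R))"

definition complete_abs ::
  "nat \<Rightarrow> (complex mat set \<Rightarrow> 'a::complete_lattice) \<Rightarrow> (complex mat \<Rightarrow> complex mat) \<Rightarrow> ('a \<Rightarrow> 'a) \<Rightarrow> bool" where
  "complete_abs n \<alpha> f fa \<longleftrightarrow> (\<forall>R. R \<subseteq> pdo n \<longrightarrow> \<alpha> (f ` R) = fa (\<alpha> R))"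

end

theory Submission
  imports Defs
begin

(* Soundness and completeness are proved by one structural induction on programs, in which
  sequencing just composes abstractions.  For conditionals and loops the point is that the
  abstraction map, being the lower adjoint of a Galois connection, turns unions of sets of states
  into joins, while condition (b) turns the sum in the semantics of a conditional into a join and
  the series in the semantics of a loop into the join of its terms.  Hence the abstraction of the
  image of a conditional (a loop) is the join of the abstractions of its branches (its unrolled
  iterations), which are abstracted correctly by induction.  The analytic input is that programs
  map partial density operators to partial density operators and that the series of a loop
  converges absolutely entrywise: the traces of its terms sum to at most the initial trace, and
  every entry of a positive matrix is bounded by twice its trace. *)

section \<open>Binary digits and local indices\<close>

lemma binary_sum_digit:
  "(\<forall>k. b k < (2::nat)) \<Longrightarrow> ((\<Sum>k<t. b k * 2 ^ k) div 2 ^ p) mod 2 = (if p < t then b p else 0)"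
proof (induction t arbitrary: b p)
  case 0 then show ?case by simp
next
  case (Suc t)
  have split: "(\<Sum>k<Suc t. b k * 2 ^ k) = b 0 + 2 * (\<Sum>k<t. b (Suc k) * 2 ^ k)"
    by (subst sum.lessThan_Suc_shift) (simp add: sum_distrib_left ac_simps)
  have b0: "b 0 < 2" using Suc.prems by auto
  show ?case
  proof (cases p)
    case 0 then show ?thesis using b0 unfolding split by simp
  next
    case (Suc p')
    define X where "X = (\<Sum>k<t. b (Suc k) * 2 ^ k)"
    have "(b 0 + 2 * X) div 2 = X" using b0 by simp
    then have "(b 0 + 2 * X) div 2 ^ p = X div 2 ^ p'"
      using Suc by (simp add: div_mult2_eq)
    then show ?thesis using Suc.IH[of "\<lambda>k. b (Suc k)" p'] Suc.prems Suc
      unfolding split X_def[symmetric] by simp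
  qed
qed

lemma binary_sum_less:
  "(\<forall>k. b k < (2::nat)) \<Longrightarrow> (\<Sum>k<t. b k * 2 ^ k) < 2 ^ t"
proof (induction t)
  case 0 then show ?case by simp
next
  case (Suc t)
  have "b t * 2 ^ t \<le> 2 ^ t"
    using Suc.prems[rule_format, of t] mult_right_mono[of "b t" 1 "2 ^ t"] by simp
  moreover have "(\<Sum>k<t. b k * 2 ^ k) < 2 ^ t" using Suc by simp
  ultimately have "(\<Sum>k<t. b k * 2 ^ k) + b t * 2 ^ t < 2 ^ t + 2 ^ t" by linarith
  then show ?case by simp
qed

lemma binary_expansion:
  "(m::nat) < 2 ^ t \<Longrightarrow> (\<Sum>p<t. ((m div 2 ^ p) mod 2) * 2 ^ p) = m"
proof (induction t arbitrary: m)
  case 0 then show ?case by simp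
next
  case (Suc t)
  have "(\<Sum>p<Suc t. ((m div 2 ^ p) mod 2) * 2 ^ p)
      = m mod 2 + 2 * (\<Sum>p<t. (((m div 2) div 2 ^ p) mod 2) * 2 ^ p)"
    by (subst sum.lessThan_Suc_shift) (simp add: sum_distrib_left div_mult2_eq ac_simps)
  also have "\<dots> = m" using Suc.IH[of "m div 2"] Suc.prems by simp
  finally show ?case .
qed

lemma qbit_less_2: "qbit i q < 2"
  by (simp add: qbit_def)

lemma loc_idx_less: "loc_idx qs i < 2 ^ length qs"
  unfolding loc_idx_def using binary_sum_less[of "\<lambda>k. qbit i (qs ! k)"] qbit_less_2 by auto

lemma loc_idx_digit: "p < length qs \<Longrightarrow> (loc_idx qs i div 2 ^ p) mod 2 = qbit i (qs ! p)"
  unfolding loc_idx_def using binary_sum_digit[of "\<lambda>k. qbit i (qs ! k)" "length qs" p] qbit_less_2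
  by auto

lemma qbit_inject:
  assumes "i < 2 ^ n" "j < 2 ^ n" "\<forall>q<n. qbit i q = qbit j q"
  shows "i = j"
proof -
  have "i = (\<Sum>p<n. qbit i p * 2 ^ p)" using binary_expansion[OF assms(1)] by (simp add: qbit_def)
  also have "\<dots> = (\<Sum>p<n. qbit j p * 2 ^ p)" using assms(3) by simp
  also have "\<dots> = j" using binary_expansion[OF assms(2)] by (simp add: qbit_def)
  finally show ?thesis .
qed

definition agree_off :: "nat \<Rightarrow> nat list \<Rightarrow> nat \<Rightarrow> nat \<Rightarrow> bool" where
  "agree_off n qs i j \<longleftrightarrow> (\<forall>q<n. q \<notin> set qs \<longrightarrow> qbit i q = qbit j q)"

lemma agree_off_refl: "agree_off n qs i i"
  by (simp add: agree_off_def)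

lemma agree_off_sym: "agree_off n qs i j \<Longrightarrow> agree_off n qs j i"
  by (simp add: agree_off_def)

lemma agree_off_trans: "agree_off n qs i j \<Longrightarrow> agree_off n qs j k \<Longrightarrow> agree_off n qs i k"
  by (simp add: agree_off_def)

lemma agree_off_loc_idx_inject:
  assumes "set qs \<subseteq> {..<n}" "i < 2 ^ n" "j < 2 ^ n"
    and "agree_off n qs i j" "loc_idx qs i = loc_idx qs j"
  shows "i = j"
proof (rule qbit_inject[OF assms(2,3)], intro allI impI)
  fix q assume q: "q < n"
  show "qbit i q = qbit j q"
  proof (cases "q \<in> set qs")
    case True
    then obtain p where "p < length qs" "q = qs ! p" by (metis in_set_conv_nth)
    then show ?thesis using loc_idx_digit[of p qs i] loc_idx_digit[of p qs j] assms(5) by simp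
  next
    case False
    then show ?thesis using assms(4) q by (simp add: agree_off_def)
  qed
qed

lemma agree_off_loc_idx_surj:
  assumes wf: "wf_reg n qs" and m: "m < 2 ^ length qs"
  shows "\<exists>k < 2 ^ n. agree_off n qs i k \<and> loc_idx qs k = m"
proof -
  define b where "b q = (if q \<in> set qs then (m div 2 ^ (THE p. p < length qs \<and> qs ! p = q)) mod 2 else qbit i q)" for q
  have b2: "\<forall>q. b q < 2" by (simp add: b_def qbit_def)
  define k where "k = (\<Sum>q<n. b q * 2 ^ q)"
  have k_less: "k < 2 ^ n" unfolding k_def using binary_sum_less[OF b2] .
  have k_bits: "qbit k q = b q" if "q < n" for q
    unfolding k_def qbit_def using binary_sum_digit[OF b2, of n q] that by simp
  have k_agree: "agree_off n qs i k" unfolding agree_off_def using k_bits by (simp add: b_def)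
  have qs_less: "\<And>p. p < length qs \<Longrightarrow> qs ! p < n" using wf nth_mem unfolding wf_reg_def by (meson lessThan_iff subsetD)
  have "loc_idx qs k = (\<Sum>p<length qs. ((m div 2 ^ p) mod 2) * 2 ^ p)"
    unfolding loc_idx_def
  proof (rule sum.cong[OF refl])
    fix p assume "p \<in> {..<length qs}"
    then have p: "p < length qs" by simp
    have "(THE p'. p' < length qs \<and> qs ! p' = qs ! p) = p"
      using wf p unfolding wf_reg_def by (auto intro!: the_equality simp: nth_eq_iff_index_eq)
    then show "qbit k (qs ! p) * 2 ^ p = m div 2 ^ p mod 2 * 2 ^ p"
      using k_bits[OF qs_less[OF p]] p by (simp add: b_def)
  qed
  also have "\<dots> = m" using binary_expansion[OF m] .
  finally show ?thesis using k_less k_agree by blast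
qed

lemma loc_idx_bij_betw:
  assumes wf: "wf_reg n qs" and i: "i < qdim n"
  shows "bij_betw (loc_idx qs) {k. k < qdim n \<and> agree_off n qs i k} {..<2 ^ length qs}"
proof (rule bij_betw_imageI)
  have sub: "set qs \<subseteq> {..<n}" using wf unfolding wf_reg_def by auto
  show "inj_on (loc_idx qs) {k. k < qdim n \<and> agree_off n qs i k}"
  proof (rule inj_onI)
    fix x y
    assume "x \<in> {k. k < qdim n \<and> agree_off n qs i k}" "y \<in> {k. k < qdim n \<and> agree_off n qs i k}"
      and "loc_idx qs x = loc_idx qs y"
    moreover have "agree_off n qs x y"
      using calculation agree_off_trans[OF agree_off_sym] by blast
    ultimately show "x = y"
      using agree_off_loc_idx_inject[OF sub] by (simp add: qdim_def)
  qed
  have "{..<2 ^ length qs} \<subseteq> loc_idx qs ` {k. k < qdim n \<and> agree_off n qs i k}"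
  proof
    fix m :: nat assume "m \<in> {..<2 ^ length qs}"
    then obtain k where "k < 2 ^ n" "agree_off n qs i k" "loc_idx qs k = m"
      using agree_off_loc_idx_surj[OF wf, of m i] by auto
    then show "m \<in> loc_idx qs ` {k. k < qdim n \<and> agree_off n qs i k}"
      by (auto simp: qdim_def)
  qed
  then show "loc_idx qs ` {k. k < qdim n \<and> agree_off n qs i k} = {..<2 ^ length qs}"
    using loc_idx_less by auto
qed

section \<open>Cylindrical extensions\<close>

lemma index_mult_mat_sum:
  assumes "A \<in> carrier_mat d m" "B \<in> carrier_mat m e" "i < d" "j < e"
  shows "(A * B) $$ (i, j) = (\<Sum>k<m. A $$ (i, k) * B $$ (k, j))"
  using assms by (simp add: scalar_prod_def atLeast0LessThan)

lemma index_mult_mat_vec_sum: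
  assumes "A \<in> carrier_mat d m" "v \<in> carrier_vec m" "i < d"
  shows "(A *\<^sub>v v) $ i = (\<Sum>k<m. A $$ (i, k) * v $ k)"
  using assms by (simp add: scalar_prod_def atLeast0LessThan)

lemma mat_adjoint_carrier: "A \<in> carrier_mat a b \<Longrightarrow> mat_adjoint A \<in> carrier_mat b a"
  unfolding mat_adjoint_def by auto

lemma index_mat_adjoint: "A \<in> carrier_mat a b \<Longrightarrow> i < b \<Longrightarrow> j < a \<Longrightarrow> mat_adjoint A $$ (i, j) = cnj (A $$ (j, i))"
  unfolding mat_adjoint_def by (auto simp: mat_of_rows_def)

lemma cyl_carrier: "cyl n qs A \<in> carrier_mat (qdim n) (qdim n)"
  unfolding cyl_def by auto

lemma index_cyl: "i < qdim n \<Longrightarrow> j < qdim n \<Longrightarrow>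
   cyl n qs A $$ (i, j) = (if agree_off n qs i j then A $$ (loc_idx qs i, loc_idx qs j) else 0)"
  unfolding cyl_def agree_off_def by auto

lemma cyl_mult:
  assumes wf: "wf_reg n qs" and A: "A \<in> carrier_mat (2 ^ length qs) (2 ^ length qs)"
    and B: "B \<in> carrier_mat (2 ^ length qs) (2 ^ length qs)"
  shows "cyl n qs A * cyl n qs B = cyl n qs (A * B)"
proof (rule eq_matI)
  let ?d = "qdim n" and ?t = "2 ^ length qs"
  show "dim_row (cyl n qs A * cyl n qs B) = dim_row (cyl n qs (A * B))"
       "dim_col (cyl n qs A * cyl n qs B) = dim_col (cyl n qs (A * B))"
    using cyl_carrier by (auto simp: cyl_def)
  fix i j assume "i < dim_row (cyl n qs (A * B))" "j < dim_col (cyl n qs (A * B))"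
  then have i: "i < ?d" and j: "j < ?d" by (auto simp: cyl_def)
  have "(cyl n qs A * cyl n qs B) $$ (i, j) = (\<Sum>k<?d. cyl n qs A $$ (i, k) * cyl n qs B $$ (k, j))"
    using index_mult_mat_sum[OF cyl_carrier cyl_carrier i j] .
  also have "\<dots> = (\<Sum>k<?d. if agree_off n qs i k \<and> agree_off n qs k j then
        A $$ (loc_idx qs i, loc_idx qs k) * B $$ (loc_idx qs k, loc_idx qs j) else 0)"
    by (rule sum.cong[OF refl]) (simp add: index_cyl i j)
  also have "\<dots> = cyl n qs (A * B) $$ (i, j)"
  proof (cases "agree_off n qs i j")
    case True
    let ?g = "\<lambda>m. A $$ (loc_idx qs i, m) * B $$ (m, loc_idx qs j)"
    have "(\<Sum>k<?d. if agree_off n qs i k \<and> agree_off n qs k j then ?g (loc_idx qs k) else 0)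
        = (\<Sum>k<?d. if agree_off n qs i k then ?g (loc_idx qs k) else 0)"
      by (rule sum.cong[OF refl]) (meson True agree_off_trans agree_off_sym)
    also have "\<dots> = (\<Sum>k\<in>{k. k < ?d \<and> agree_off n qs i k}. ?g (loc_idx qs k))"
      by (simp add: sum.inter_filter[symmetric] lessThan_def)
    also have "\<dots> = (\<Sum>m<?t. ?g m)"
      using sum.reindex_bij_betw[OF loc_idx_bij_betw[OF wf i], of ?g] by simp
    also have "\<dots> = (A * B) $$ (loc_idx qs i, loc_idx qs j)"
      using index_mult_mat_sum[OF A B loc_idx_less loc_idx_less] by simp
    finally show ?thesis using True by (simp add: index_cyl i j)
  next
    case False
    have "(\<Sum>k<?d. if agree_off n qs i k \<and> agree_off n qs k j then
        A $$ (loc_idx qs i, loc_idx qs k) * B $$ (loc_idx qs k, loc_idx qs j) else 0) = 0"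
      by (rule sum.neutral) (meson False agree_off_trans)
    then show ?thesis using False by (simp add: index_cyl i j)
  qed
  finally show "(cyl n qs A * cyl n qs B) $$ (i, j) = cyl n qs (A * B) $$ (i, j)" .
qed

lemma mat_adjoint_cyl:
  assumes A: "A \<in> carrier_mat (2 ^ length qs) (2 ^ length qs)"
  shows "mat_adjoint (cyl n qs A) = cyl n qs (mat_adjoint A)"
proof (rule eq_matI)
  show "dim_row (mat_adjoint (cyl n qs A)) = dim_row (cyl n qs (mat_adjoint A))"
       "dim_col (mat_adjoint (cyl n qs A)) = dim_col (cyl n qs (mat_adjoint A))"
    by (auto simp: cyl_def mat_adjoint_def)
  fix i j assume "i < dim_row (cyl n qs (mat_adjoint A))" "j < dim_col (cyl n qs (mat_adjoint A))"
  then have i: "i < qdim n" and j: "j < qdim n" by (auto simp: cyl_def)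
  show "mat_adjoint (cyl n qs A) $$ (i, j) = cyl n qs (mat_adjoint A) $$ (i, j)"
    using index_mat_adjoint[OF cyl_carrier i j] index_mat_adjoint[OF A loc_idx_less loc_idx_less]
    using agree_off_sym[of n qs i j] agree_off_sym[of n qs j i] by (auto simp: index_cyl i j)
qed

lemma cyl_one:
  assumes wf: "wf_reg n qs"
  shows "cyl n qs (1\<^sub>m (2 ^ length qs)) = 1\<^sub>m (qdim n)"
proof (rule eq_matI)
  show "dim_row (cyl n qs (1\<^sub>m (2 ^ length qs))) = dim_row (1\<^sub>m (qdim n))"
       "dim_col (cyl n qs (1\<^sub>m (2 ^ length qs))) = dim_col (1\<^sub>m (qdim n))"
    by (auto simp: cyl_def)
  have sub: "set qs \<subseteq> {..<n}" using wf unfolding wf_reg_def by auto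
  fix i j assume "i < dim_row (1\<^sub>m (qdim n))" "j < dim_col (1\<^sub>m (qdim n))"
  then have i: "i < qdim n" and j: "j < qdim n" by auto
  show "cyl n qs (1\<^sub>m (2 ^ length qs)) $$ (i, j) = 1\<^sub>m (qdim n) $$ (i, j)"
    using agree_off_loc_idx_inject[OF sub, of i j] i j loc_idx_less[of qs i] loc_idx_less[of qs j]
    by (auto simp: index_cyl qdim_def agree_off_refl)
qed

lemma cyl_add_cyl_ortho:
  assumes wf: "wf_reg n qs" and P: "P \<in> carrier_mat (2 ^ length qs) (2 ^ length qs)"
  shows "cyl n qs P + cyl n qs (ortho qs P) = 1\<^sub>m (qdim n)"
proof -
  have "cyl n qs P + cyl n qs (ortho qs P) = cyl n qs (1\<^sub>m (2 ^ length qs))"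
  proof (rule eq_matI)
    fix i j assume "i < dim_row (cyl n qs (1\<^sub>m (2 ^ length qs)))" "j < dim_col (cyl n qs (1\<^sub>m (2 ^ length qs)))"
    then have i: "i < qdim n" and j: "j < qdim n" by (auto simp: cyl_def)
    have e: "(cyl n qs P + cyl n qs (ortho qs P)) $$ (i, j) = cyl n qs P $$ (i, j) + cyl n qs (ortho qs P) $$ (i, j)"
      by (metis cyl_carrier carrier_matD index_add_mat(1) i j)
    show "(cyl n qs P + cyl n qs (ortho qs P)) $$ (i, j) = cyl n qs (1\<^sub>m (2 ^ length qs)) $$ (i, j)"
      unfolding e using P loc_idx_less[of qs i] loc_idx_less[of qs j] i j cyl_carrier[of n qs]
      by (auto simp: index_cyl ortho_def)
  qed (auto simp: cyl_def)
  then show ?thesis using cyl_one[OF wf] by simp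
qed

lemma is_projector_ortho:
  assumes P: "is_projector (2 ^ length qs) P"
  shows "is_projector (2 ^ length qs) (ortho qs P)"
proof -
  let ?m = "2 ^ length qs"
  have Pc: "P \<in> carrier_mat ?m ?m" and PP: "P * P = P" and Pa: "mat_adjoint P = P"
    using P unfolding is_projector_def by auto
  have oc: "ortho qs P \<in> carrier_mat ?m ?m" unfolding ortho_def using Pc by (rule minus_carrier_mat)
  have "P * (1\<^sub>m ?m - P) = P * 1\<^sub>m ?m - P * P" using mult_minus_distrib_mat[OF Pc one_carrier_mat Pc] .
  also have "\<dots> = 0\<^sub>m ?m ?m" using Pc PP by simp
  finally have z: "P * (1\<^sub>m ?m - P) = 0\<^sub>m ?m ?m" .
  have "ortho qs P * ortho qs P = 1\<^sub>m ?m * (1\<^sub>m ?m - P) - P * (1\<^sub>m ?m - P)"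
    unfolding ortho_def using minus_mult_distrib_mat[OF one_carrier_mat Pc minus_carrier_mat[OF Pc, of "1\<^sub>m ?m"]] by simp
  also have "\<dots> = ortho qs P" unfolding z ortho_def using Pc by (intro eq_matI) auto
  finally have sq: "ortho qs P * ortho qs P = ortho qs P" .
  have adj: "mat_adjoint (ortho qs P) = ortho qs P"
  proof (rule eq_matI)
    fix i j assume "i < dim_row (ortho qs P)" "j < dim_col (ortho qs P)"
    then have i: "i < ?m" and j: "j < ?m" using oc by auto
    have "P $$ (i, j) = cnj (P $$ (j, i))" using index_mat_adjoint[OF Pc i j] Pa by simp
    then show "mat_adjoint (ortho qs P) $$ (i, j) = ortho qs P $$ (i, j)"
      using index_mat_adjoint[OF oc i j] i j Pc by (simp add: ortho_def)
  qed (use mat_adjoint_carrier[OF oc] oc in auto)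
  show ?thesis unfolding is_projector_def using oc sq adj by auto
qed

section \<open>Positive operators and traces\<close>

definition quad_form :: "nat \<Rightarrow> complex mat \<Rightarrow> complex vec \<Rightarrow> complex" where
  "quad_form d A v = (\<Sum>i<d. cnj (v $ i) * (A *\<^sub>v v) $ i)"

definition mat_trace :: "nat \<Rightarrow> complex mat \<Rightarrow> complex" where
  "mat_trace d A = (\<Sum>i<d. A $$ (i, i))"

lemma positive_op_iff_quad_form: "positive_op d A \<longleftrightarrow> A \<in> carrier_mat d d \<and>
   (\<forall>v\<in>carrier_vec d. Im (quad_form d A v) = 0 \<and> 0 \<le> Re (quad_form d A v))"
  unfolding positive_op_def quad_form_def Let_def by simp

lemma pdo_iff_trace: "\<rho> \<in> pdo n \<longleftrightarrow> positive_op (qdim n) \<rho> \<and> Re (mat_trace (qdim n) \<rho>) \<le> 1"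
  unfolding pdo_def mat_trace_def by simp

lemma positive_op_carrier: "positive_op d A \<Longrightarrow> A \<in> carrier_mat d d"
  unfolding positive_op_iff_quad_form by auto

lemma quad_form_expand:
  assumes "A \<in> carrier_mat d d" "v \<in> carrier_vec d"
  shows "quad_form d A v = (\<Sum>i<d. cnj (v $ i) * (\<Sum>k<d. A $$ (i, k) * v $ k))"
  unfolding quad_form_def by (rule sum.cong[OF refl]) (simp add: index_mult_mat_vec_sum[OF assms])

lemma quad_form_conj:
  assumes K: "K \<in> carrier_mat d d" and r: "\<rho> \<in> carrier_mat d d" and v: "v \<in> carrier_vec d"
  shows "quad_form d (K * \<rho> * mat_adjoint K) v = quad_form d \<rho> (mat_adjoint K *\<^sub>v v)"
proof -
  have Ka: "mat_adjoint K \<in> carrier_mat d d" using mat_adjoint_carrier[OF K] .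
  define u where "u = mat_adjoint K *\<^sub>v v"
  have u: "u \<in> carrier_vec d" using Ka v by (simp add: u_def)
  define w where "w = \<rho> *\<^sub>v u"
  have w: "w \<in> carrier_vec d" using r u by (simp add: w_def)
  have e1: "(K * \<rho> * mat_adjoint K) *\<^sub>v v = K *\<^sub>v w"
  proof -
    have Kr: "K * \<rho> \<in> carrier_mat d d" using K r by simp
    have "(K * \<rho> * mat_adjoint K) *\<^sub>v v = (K * \<rho>) *\<^sub>v u"
      unfolding u_def using assoc_mult_mat_vec[OF Kr Ka v] .
    also have "\<dots> = K *\<^sub>v w" unfolding w_def using assoc_mult_mat_vec[OF K r u] .
    finally show ?thesis .
  qed
  have uk: "cnj (u $ k) = (\<Sum>i<d. K $$ (i, k) * cnj (v $ i))" if "k < d" for k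
    using index_mult_mat_vec_sum[OF Ka v that] index_mat_adjoint[OF K that] unfolding u_def
    by (simp add: sum_conjugate index_mat_adjoint[OF K that] )
  have "quad_form d (K * \<rho> * mat_adjoint K) v = (\<Sum>i<d. cnj (v $ i) * (\<Sum>k<d. K $$ (i, k) * w $ k))"
    unfolding quad_form_def e1 by (rule sum.cong[OF refl]) (simp add: index_mult_mat_vec_sum[OF K w])
  also have "\<dots> = (\<Sum>i<d. \<Sum>k<d. cnj (v $ i) * K $$ (i, k) * w $ k)"
    by (simp add: sum_distrib_left mult.assoc)
  also have "\<dots> = (\<Sum>k<d. \<Sum>i<d. cnj (v $ i) * K $$ (i, k) * w $ k)"
    by (rule sum.swap)
  also have "\<dots> = (\<Sum>k<d. cnj (u $ k) * w $ k)"
    by (rule sum.cong[OF refl]) (simp add: uk sum_distrib_right sum_distrib_left ac_simps)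
  also have "\<dots> = quad_form d \<rho> u" unfolding quad_form_def w_def ..
  finally show ?thesis unfolding u_def .
qed

lemma positive_op_conj:
  assumes r: "positive_op d \<rho>" and K: "K \<in> carrier_mat d d"
  shows "positive_op d (K * \<rho> * mat_adjoint K)"
proof -
  have rc: "\<rho> \<in> carrier_mat d d" using r unfolding positive_op_iff_quad_form by auto
  have Ka: "mat_adjoint K \<in> carrier_mat d d" using mat_adjoint_carrier[OF K] .
  show ?thesis unfolding positive_op_iff_quad_form
  proof (intro conjI ballI)
    show "K * \<rho> * mat_adjoint K \<in> carrier_mat d d" using K rc Ka by simp
    fix v :: "complex vec" assume v: "v \<in> carrier_vec d"
    have u: "mat_adjoint K *\<^sub>v v \<in> carrier_vec d" using Ka v by simp
    show "Im (quad_form d (K * \<rho> * mat_adjoint K) v) = 0" "0 \<le> Re (quad_form d (K * \<rho> * mat_adjoint K) v)"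
      using r u unfolding quad_form_conj[OF K rc v] positive_op_iff_quad_form by auto
  qed
qed

lemma quad_form_add:
  assumes "A \<in> carrier_mat d d" "B \<in> carrier_mat d d" "v \<in> carrier_vec d"
  shows "quad_form d (A + B) v = quad_form d A v + quad_form d B v"
  unfolding quad_form_def using assms
  by (simp add: add_mult_distrib_mat_vec sum.distrib distrib_left)

lemma positive_op_add:
  assumes "positive_op d A" "positive_op d B"
  shows "positive_op d (A + B)"
  using assms unfolding positive_op_iff_quad_form by (auto simp: quad_form_add)

lemma positive_op_zero: "positive_op d (0\<^sub>m d d)"
  unfolding positive_op_iff_quad_form quad_form_def by auto

lemma sum_one_point:
  assumes "r < (d::nat)" "\<And>i. i < d \<Longrightarrow> i \<noteq> r \<Longrightarrow> g i = 0"
  shows "(\<Sum>i<d. g i) = g r"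
  using assms by (subst sum.remove[of _ r]) (auto intro!: sum.neutral)

lemma sum_two_points:
  assumes "r < (d::nat)" "c < d" "r \<noteq> c" "\<And>i. i < d \<Longrightarrow> i \<noteq> r \<Longrightarrow> i \<noteq> c \<Longrightarrow> g i = 0"
  shows "(\<Sum>i<d. g i) = g r + g c"
proof -
  have "(\<Sum>i<d. g i) = g r + (\<Sum>i\<in>{..<d} - {r}. g i)" using assms by (subst sum.remove[of _ r]) auto
  also have "(\<Sum>i\<in>{..<d} - {r}. g i) = g c"
    using assms by (subst sum.remove[of _ c]) (auto intro!: sum.neutral)
  finally show ?thesis .
qed

lemma positive_op_diag:
  assumes A: "positive_op d A" and i: "i < d"
  shows "Im (A $$ (i, i)) = 0" "0 \<le> Re (A $$ (i, i))"
proof -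
  have Ac: "A \<in> carrier_mat d d" using A unfolding positive_op_iff_quad_form by auto
  define v :: "complex vec" where "v = unit_vec d i"
  have v: "v \<in> carrier_vec d" by (simp add: v_def)
  have "quad_form d A v = A $$ (i, i)"
    unfolding quad_form_expand[OF Ac v]
    by (subst sum_one_point[OF i]) (auto simp: v_def i intro!: sum_one_point[OF i, THEN trans])
  then show "Im (A $$ (i, i)) = 0" "0 \<le> Re (A $$ (i, i))" using A v unfolding positive_op_iff_quad_form by auto
qed

lemma quad_form_two_points:
  assumes Ac: "A \<in> carrier_mat d d" and rc: "r < d" "c < d" "r \<noteq> c"
  shows "quad_form d A (vec d (\<lambda>k. if k = r then 1 else if k = c then u else 0))
     = A $$ (r, r) + A $$ (r, c) * u + cnj u * (A $$ (c, r) + A $$ (c, c) * u)"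
proof -
  let ?v = "vec d (\<lambda>k. if k = r then 1 else if k = c then u else 0)"
  have v: "?v \<in> carrier_vec d" by simp
  have inner: "(\<Sum>k<d. A $$ (i, k) * ?v $ k) = A $$ (i, r) + A $$ (i, c) * u" for i
    by (subst sum_two_points[OF rc]) (use rc in auto)
  show ?thesis
    unfolding quad_form_expand[OF Ac v] inner
    by (subst sum_two_points[OF rc]) (use rc in auto)
qed

lemma positive_op_offdiag_bound:
  assumes A: "positive_op d A" and rc: "r < d" "c < d" "r \<noteq> c"
  shows "cmod (A $$ (r, c)) \<le> Re (A $$ (r, r)) + Re (A $$ (c, c))"
proof -
  have Ac: "A \<in> carrier_mat d d" using A unfolding positive_op_iff_quad_form by auto
  have Q: "Im (A $$ (r, r) + A $$ (r, c) * u + cnj u * (A $$ (c, r) + A $$ (c, c) * u)) = 0 \<and>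
           0 \<le> Re (A $$ (r, r) + A $$ (r, c) * u + cnj u * (A $$ (c, r) + A $$ (c, c) * u))" for u
    using A unfolding positive_op_iff_quad_form quad_form_two_points[OF Ac rc, symmetric] by auto
  have da: "Im (A $$ (r, r)) = 0" "Im (A $$ (c, c)) = 0" using positive_op_diag[OF A] rc by auto
  have q1: "Re (A $$ (r, r)) + Re (A $$ (r, c)) + Re (A $$ (c, r)) + Re (A $$ (c, c)) \<ge> 0"
    using Q[of 1] by simp
  have q2: "Re (A $$ (r, r)) - Re (A $$ (r, c)) - Re (A $$ (c, r)) + Re (A $$ (c, c)) \<ge> 0"
    using Q[of "-1"] by simp
  have q4: "Re (A $$ (r, r)) - Im (A $$ (r, c)) + Im (A $$ (c, r)) + Re (A $$ (c, c)) \<ge> 0"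
    using Q[of "\<i>"] by simp
  have q5: "Re (A $$ (r, r)) + Im (A $$ (r, c)) - Im (A $$ (c, r)) + Re (A $$ (c, c)) \<ge> 0"
    using Q[of "-\<i>"] by simp
  have q6: "Im (A $$ (r, c)) + Im (A $$ (c, r)) = 0" using Q[of 1] da by simp
  have q7: "Re (A $$ (r, c)) - Re (A $$ (c, r)) = 0" using Q[of "\<i>"] da by simp
  show ?thesis using cmod_le[of "A $$ (r, c)"] q1 q2 q4 q5 q6 q7 by linarith
qed

lemma mat_trace_nonneg:
  assumes A: "positive_op d A"
  shows "Im (mat_trace d A) = 0" "0 \<le> Re (mat_trace d A)"
  using positive_op_diag[OF A] unfolding mat_trace_def by (auto simp: Im_sum Re_sum intro: sum_nonneg)

lemma positive_op_diag_le_trace: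
  assumes A: "positive_op d A" and i: "i < d"
  shows "Re (A $$ (i, i)) \<le> Re (mat_trace d A)"
  unfolding mat_trace_def Re_sum
  by (rule member_le_sum) (use positive_op_diag[OF A] i in auto)

lemma positive_op_entry_bound:
  assumes A: "positive_op d A" and rc: "r < d" "c < d"
  shows "cmod (A $$ (r, c)) \<le> 2 * Re (mat_trace d A)"
proof (cases "r = c")
  case True
  have "cmod (A $$ (r, c)) = Re (A $$ (r, r))"
    using positive_op_diag[OF A rc(1)] True by (simp add: cmod_eq_Re)
  then show ?thesis using positive_op_diag_le_trace[OF A rc(1)] mat_trace_nonneg[OF A] by linarith
next
  case False
  show ?thesis using positive_op_offdiag_bound[OF A rc False] positive_op_diag_le_trace[OF A rc(1)] positive_op_diag_le_trace[OF A rc(2)] by linarith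
qed

lemma mat_trace_mult_comm:
  assumes "A \<in> carrier_mat d d" "B \<in> carrier_mat d d"
  shows "mat_trace d (A * B) = mat_trace d (B * A)"
proof -
  have "mat_trace d (A * B) = (\<Sum>i<d. \<Sum>k<d. A $$ (i, k) * B $$ (k, i))"
    unfolding mat_trace_def by (rule sum.cong[OF refl]) (simp add: index_mult_mat_sum[OF assms])
  also have "\<dots> = (\<Sum>k<d. \<Sum>i<d. B $$ (k, i) * A $$ (i, k))"
    by (subst sum.swap) (simp add: mult.commute)
  also have "\<dots> = mat_trace d (B * A)"
    unfolding mat_trace_def by (rule sum.cong[OF refl]) (simp add: index_mult_mat_sum[OF assms(2,1)])
  finally show ?thesis .
qed

lemma mat_trace_add:
  assumes "A \<in> carrier_mat d d" "B \<in> carrier_mat d d"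
  shows "mat_trace d (A + B) = mat_trace d A + mat_trace d B"
  unfolding mat_trace_def using assms by (simp add: sum.distrib)

lemma mat_trace_conj:
  assumes K: "K \<in> carrier_mat d d" and r: "\<rho> \<in> carrier_mat d d"
  shows "mat_trace d (K * \<rho> * mat_adjoint K) = mat_trace d (mat_adjoint K * K * \<rho>)"
proof -
  have Ka: "mat_adjoint K \<in> carrier_mat d d" using mat_adjoint_carrier[OF K] .
  have "mat_trace d (K * \<rho> * mat_adjoint K) = mat_trace d (mat_adjoint K * (K * \<rho>))"
    by (rule mat_trace_mult_comm) (use K r Ka in auto)
  also have "\<dots> = mat_trace d (mat_adjoint K * K * \<rho>)"
    using assoc_mult_mat[OF Ka K r] by simp
  finally show ?thesis .
qed

section \<open>Programs do not increase the trace\<close>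

lemma index_ket0bra_adjoint_mult:
  assumes "a < m" "b < m" "i < m"
  shows "(mat_adjoint (ket0bra m i) * ket0bra m i) $$ (a, b) = (if a = i \<and> b = i then 1 else 0)"
proof -
  have kc: "ket0bra m i \<in> carrier_mat m m" unfolding ket0bra_def by simp
  have "(mat_adjoint (ket0bra m i) * ket0bra m i) $$ (a, b) =
        (\<Sum>c<m. cnj (ket0bra m i $$ (c, a)) * ket0bra m i $$ (c, b))"
    unfolding index_mult_mat_sum[OF mat_adjoint_carrier[OF kc] kc assms(1,2)]
    by (rule sum.cong[OF refl]) (simp add: index_mat_adjoint[OF kc assms(1)])
  also have "\<dots> = (\<Sum>c<m. if c = 0 then (if a = i \<and> b = i then 1 else 0) else 0)"
    by (rule sum.cong[OF refl]) (use assms in \<open>auto simp: ket0bra_def\<close>)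
  also have "\<dots> = (if a = i \<and> b = i then 1 else 0)" using assms by simp
  finally show ?thesis .
qed

lemma bsem_Assert_conj:
  assumes P: "is_projector (2 ^ length qs) P"
  shows "bsem n (Assert qs P) \<rho> = cyl n qs P * \<rho> * mat_adjoint (cyl n qs P)"
  using P mat_adjoint_cyl[of P qs n] unfolding is_projector_def by simp

lemma mat_adjoint_cyl_projector_mult:
  assumes wf: "wf_reg n qs" and P: "is_projector (2 ^ length qs) P"
  shows "mat_adjoint (cyl n qs P) * cyl n qs P = cyl n qs P"
  using P mat_adjoint_cyl[of P qs n] cyl_mult[OF wf, of P P] unfolding is_projector_def by simp

lemma positive_op_bsem_Assert:
  assumes P: "is_projector (2 ^ length qs) P" and r: "positive_op (qdim n) \<rho>"
  shows "positive_op (qdim n) (bsem n (Assert qs P) \<rho>)"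
  unfolding bsem_Assert_conj[OF P] by (rule positive_op_conj[OF r cyl_carrier])

lemma trace_bsem_Assert:
  assumes wf: "wf_reg n qs" and P: "is_projector (2 ^ length qs) P" and r: "\<rho> \<in> carrier_mat (qdim n) (qdim n)"
  shows "mat_trace (qdim n) (bsem n (Assert qs P) \<rho>) = mat_trace (qdim n) (cyl n qs P * \<rho>)"
  unfolding bsem_Assert_conj[OF P] mat_trace_conj[OF cyl_carrier r] mat_adjoint_cyl_projector_mult[OF wf P] ..

lemma trace_bsem_Assert_ortho:
  assumes wf: "wf_reg n qs" and P: "is_projector (2 ^ length qs) P" and r: "\<rho> \<in> carrier_mat (qdim n) (qdim n)"
  shows "mat_trace (qdim n) (bsem n (Assert qs P) \<rho>) + mat_trace (qdim n) (bsem n (Assert qs (ortho qs P)) \<rho>) = mat_trace (qdim n) \<rho>"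
proof -
  have Pc: "P \<in> carrier_mat (2 ^ length qs) (2 ^ length qs)" using P unfolding is_projector_def by auto
  have "mat_trace (qdim n) (bsem n (Assert qs P) \<rho>) + mat_trace (qdim n) (bsem n (Assert qs (ortho qs P)) \<rho>)
      = mat_trace (qdim n) (cyl n qs P * \<rho>) + mat_trace (qdim n) (cyl n qs (ortho qs P) * \<rho>)"
    using trace_bsem_Assert[OF wf P r] trace_bsem_Assert[OF wf is_projector_ortho[OF P] r] by simp
  also have "\<dots> = mat_trace (qdim n) ((cyl n qs P + cyl n qs (ortho qs P)) * \<rho>)"
    using add_mult_distrib_mat[OF cyl_carrier cyl_carrier r] mat_trace_add[of "cyl n qs P * \<rho>" "qdim n"] r cyl_carrier
    by (metis mult_carrier_mat)
  also have "\<dots> = mat_trace (qdim n) \<rho>" unfolding cyl_add_cyl_ortho[OF wf Pc] using r by simp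
  finally show ?thesis .
qed

lemma mat_fsum_Suc:
  assumes "M K \<in> carrier_mat d d"
  shows "mat_fsum d M (Suc K) = mat_fsum d M K + M K"
  using assms by (intro eq_matI) (auto simp: mat_fsum_def)

lemma positive_op_mat_fsum:
  "(\<And>k. k < K \<Longrightarrow> positive_op d (M k)) \<Longrightarrow> positive_op d (mat_fsum d M K)"
proof (induction K)
  case 0
  have "mat_fsum d M 0 = 0\<^sub>m d d" by (intro eq_matI) (auto simp: mat_fsum_def)
  then show ?case using positive_op_zero by simp
next
  case (Suc K)
  have c: "M K \<in> carrier_mat d d" using positive_op_carrier Suc.prems by simp
  then show ?case using mat_fsum_Suc[of M K d, OF c] positive_op_add Suc by simp
qed

lemma mat_trace_mat_fsum: "mat_trace d (mat_fsum d M K) = (\<Sum>k<K. mat_trace d (M k))"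
  unfolding mat_trace_def mat_fsum_def by (simp add: sum.swap[of _ "{..<K}"])

lemma sum_cyl_ket0bra_projections:
  assumes wf: "wf_reg n qs" and ab: "a < qdim n" "b < qdim n"
  shows "(\<Sum>i<2 ^ length qs. cyl n qs (mat_adjoint (ket0bra (2 ^ length qs) i) * ket0bra (2 ^ length qs) i) $$ (a, b))
     = (if a = b then 1 else 0)"
proof -
  let ?m = "2 ^ length qs"
  have sub: "set qs \<subseteq> {..<n}" using wf unfolding wf_reg_def by auto
  have "(\<Sum>i<?m. cyl n qs (mat_adjoint (ket0bra ?m i) * ket0bra ?m i) $$ (a, b))
     = (\<Sum>i<?m. if agree_off n qs a b then (if loc_idx qs a = i \<and> loc_idx qs b = i then 1 else 0) else 0)"
    by (rule sum.cong[OF refl]) (simp add: index_cyl ab index_ket0bra_adjoint_mult loc_idx_less)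
  also have "\<dots> = (if agree_off n qs a b \<and> loc_idx qs a = loc_idx qs b then 1 else 0)"
  proof (cases "agree_off n qs a b \<and> loc_idx qs a = loc_idx qs b")
    case True
    then show ?thesis using loc_idx_less[of qs b] by (simp add: sum.delta')
  next
    case False
    then show ?thesis by (auto intro!: sum.neutral)
  qed
  also have "\<dots> = (if a = b then 1 else 0)"
    using agree_off_loc_idx_inject[OF sub, of a b] ab agree_off_refl by (auto simp: qdim_def)
  finally show ?thesis .
qed

lemma trace_bsem_Init:
  assumes wf: "wf_reg n qs" and r: "\<rho> \<in> carrier_mat (qdim n) (qdim n)"
  shows "mat_trace (qdim n) (bsem n (Init qs) \<rho>) = mat_trace (qdim n) \<rho>"
proof -
  let ?m = "2 ^ length qs" and ?d = "qdim n"
  let ?E = "\<lambda>i. cyl n qs (mat_adjoint (ket0bra ?m i) * ket0bra ?m i)"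
  have kc: "ket0bra ?m i \<in> carrier_mat ?m ?m" for i unfolding ket0bra_def by simp
  have KK: "mat_adjoint (cyl n qs (ket0bra ?m i)) * cyl n qs (ket0bra ?m i) = ?E i" for i
    using mat_adjoint_cyl[OF kc, of n i] cyl_mult[OF wf mat_adjoint_carrier[OF kc] kc] by simp
  have "mat_trace ?d (bsem n (Init qs) \<rho>) = (\<Sum>i<?m. mat_trace ?d (cyl n qs (ket0bra ?m i) * \<rho> * mat_adjoint (cyl n qs (ket0bra ?m i))))"
    by (simp add: mat_trace_mat_fsum)
  also have "\<dots> = (\<Sum>i<?m. mat_trace ?d (?E i * \<rho>))"
    by (rule sum.cong[OF refl]) (simp add: mat_trace_conj[OF cyl_carrier r] KK)
  also have "\<dots> = (\<Sum>i<?m. \<Sum>a<?d. \<Sum>b<?d. ?E i $$ (a, b) * \<rho> $$ (b, a))"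
    unfolding mat_trace_def by (rule sum.cong[OF refl], rule sum.cong[OF refl]) (simp add: index_mult_mat_sum[OF cyl_carrier r])
  also have "\<dots> = (\<Sum>a<?d. \<Sum>b<?d. (\<Sum>i<?m. ?E i $$ (a, b)) * \<rho> $$ (b, a))"
    by (simp add: sum_distrib_right sum.swap[of _ "{..<?m}"])
  also have "\<dots> = (\<Sum>a<?d. \<Sum>b<?d. (if a = b then 1 else 0) * \<rho> $$ (b, a))"
    by (rule sum.cong[OF refl], rule sum.cong[OF refl]) (simp add: sum_cyl_ket0bra_projections[OF wf])
  also have "\<dots> = mat_trace ?d \<rho>" unfolding mat_trace_def
    by (rule sum.cong[OF refl]) (subst sum_one_point, auto)
  finally show ?thesis .
qed

lemma trace_bsem_Apply:
  assumes wf: "wf_reg n qs" and U: "is_unitary (2 ^ length qs) U"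
    and r: "\<rho> \<in> carrier_mat (qdim n) (qdim n)"
  shows "mat_trace (qdim n) (bsem n (Apply qs U) \<rho>) = mat_trace (qdim n) \<rho>"
proof -
  have Uc: "U \<in> carrier_mat (2 ^ length qs) (2 ^ length qs)" and "U * mat_adjoint U = 1\<^sub>m (2 ^ length qs)"
    using U unfolding is_unitary_def by auto
  then have "mat_adjoint U * U = 1\<^sub>m (2 ^ length qs)"
    using mat_mult_left_right_inverse[OF Uc mat_adjoint_carrier[OF Uc]] by blast
  then have "mat_adjoint (cyl n qs U) * cyl n qs U = 1\<^sub>m (qdim n)"
    using mat_adjoint_cyl[OF Uc, of n] cyl_mult[OF wf mat_adjoint_carrier[OF Uc] Uc] cyl_one[OF wf] by simp
  then show ?thesis
    using mat_trace_conj[OF cyl_carrier r, of qs U] r by simp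
qed

definition trace_nonincreasing :: "nat \<Rightarrow> (complex mat \<Rightarrow> complex mat) \<Rightarrow> bool" where
  "trace_nonincreasing d f \<longleftrightarrow>
     (\<forall>\<rho>. positive_op d \<rho> \<longrightarrow> positive_op d (f \<rho>) \<and> Re (mat_trace d (f \<rho>)) \<le> Re (mat_trace d \<rho>))"

lemma trace_nonincreasingD:
  "trace_nonincreasing d f \<Longrightarrow> positive_op d \<rho> \<Longrightarrow>
     positive_op d (f \<rho>) \<and> Re (mat_trace d (f \<rho>)) \<le> Re (mat_trace d \<rho>)"
  unfolding trace_nonincreasing_def by blast

lemma trace_nonincreasing_comp:
  "trace_nonincreasing d f \<Longrightarrow> trace_nonincreasing d g \<Longrightarrow> trace_nonincreasing d (g \<circ> f)"
  unfolding trace_nonincreasing_def by fastforce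

lemma trace_nonincreasing_pdo:
  "trace_nonincreasing (qdim n) f \<Longrightarrow> \<rho> \<in> pdo n \<Longrightarrow> f \<rho> \<in> pdo n"
  unfolding trace_nonincreasing_def pdo_iff_trace by fastforce

lemma bsem_trace_nonincreasing:
  assumes wf: "wf_bcmd n e"
  shows "trace_nonincreasing (qdim n) (bsem n e)"
  unfolding trace_nonincreasing_def
proof (intro allI impI)
  fix \<rho> assume r: "positive_op (qdim n) \<rho>"
  have rc: "\<rho> \<in> carrier_mat (qdim n) (qdim n)" using positive_op_carrier[OF r] .
  show "positive_op (qdim n) (bsem n e \<rho>) \<and> Re (mat_trace (qdim n) (bsem n e \<rho>)) \<le> Re (mat_trace (qdim n) \<rho>)"
  proof (cases e)
    case Skip then show ?thesis using r by simp
  next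
    case (Init qs)
    then have w: "wf_reg n qs" using wf by simp
    have "positive_op (qdim n) (bsem n (Init qs) \<rho>)"
      by (simp, rule positive_op_mat_fsum, rule positive_op_conj[OF r cyl_carrier])
    then show ?thesis using trace_bsem_Init[OF w rc] Init by simp
  next
    case (Apply qs U)
    then have "wf_reg n qs" "is_unitary (2 ^ length qs) U" using wf by auto
    then have "mat_trace (qdim n) (bsem n (Apply qs U) \<rho>) = mat_trace (qdim n) \<rho>"
      using rc by (rule trace_bsem_Apply)
    moreover have "positive_op (qdim n) (bsem n (Apply qs U) \<rho>)"
      using positive_op_conj[OF r cyl_carrier] by simp
    ultimately show ?thesis using Apply by simp
  next
    case (Assert qs P)
    then have w: "wf_reg n qs" and P: "is_projector (2 ^ length qs) P" using wf by auto
    have "0 \<le> Re (mat_trace (qdim n) (bsem n (Assert qs (ortho qs P)) \<rho>))"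
      using mat_trace_nonneg(2)[OF positive_op_bsem_Assert[OF is_projector_ortho[OF P] r]] .
    then have "Re (mat_trace (qdim n) (bsem n (Assert qs P) \<rho>)) \<le> Re (mat_trace (qdim n) \<rho>)"
      using arg_cong[OF trace_bsem_Assert_ortho[OF w P rc], of Re] by simp
    then show ?thesis using positive_op_bsem_Assert[OF P r] Assert by simp
  qed
qed

lemma positive_op_mat_suminf:
  fixes t :: "nat \<Rightarrow> complex mat"
  assumes pos: "\<And>j. positive_op d (t j)" and bd: "\<And>K. (\<Sum>j<K. Re (mat_trace d (t j))) \<le> B"
  shows "positive_op d (mat_suminf d t)" "Re (mat_trace d (mat_suminf d t)) \<le> B"
    "\<And>r c. r < d \<Longrightarrow> c < d \<Longrightarrow> ((\<lambda>j. t j $$ (r, c)) has_sum mat_suminf d t $$ (r, c)) UNIV"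
proof -
  let ?S = "mat_suminf d t"
  have trn: "0 \<le> Re (mat_trace d (t j))" for j using mat_trace_nonneg[OF pos] by auto
  have sumtr: "summable (\<lambda>j. Re (mat_trace d (t j)))"
    by (rule summableI_nonneg_bounded[OF trn bd])
  have nsum: "summable (\<lambda>j. norm (t j $$ (r, c)))" if "r < d" "c < d" for r c
  proof (rule summable_comparison_test[OF _ summable_mult[OF sumtr, of 2]])
    show "\<exists>N. \<forall>n\<ge>N. norm (norm (t n $$ (r, c))) \<le> 2 * Re (mat_trace d (t n))"
      using positive_op_entry_bound[OF pos that] by auto
  qed
  have esums: "(\<lambda>j. t j $$ (r, c)) sums (?S $$ (r, c))" if "r < d" "c < d" for r c
    using summable_sums[OF summable_norm_cancel[OF nsum[OF that]]] that
    by (simp add: mat_suminf_def)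
  show "((\<lambda>j. t j $$ (r, c)) has_sum ?S $$ (r, c)) UNIV" if "r < d" "c < d" for r c
    by (rule norm_summable_imp_has_sum[OF nsum[OF that] esums[OF that]])
  have Sc: "?S \<in> carrier_mat d d" unfolding mat_suminf_def by simp
  have tc: "t j \<in> carrier_mat d d" for j using positive_op_carrier[OF pos] .
  show "positive_op d ?S" unfolding positive_op_iff_quad_form
  proof (intro conjI ballI Sc)
    fix v :: "complex vec" assume v: "v \<in> carrier_vec d"
    have "(\<lambda>j. quad_form d (t j) v) sums quad_form d ?S v"
      unfolding quad_form_expand[OF Sc v] quad_form_expand[OF tc v] sum_distrib_left
      by (intro sums_sum sums_mult sums_mult2 esums) auto
    then have s1: "(\<lambda>j. Re (quad_form d (t j) v)) sums Re (quad_form d ?S v)"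
          and s2: "(\<lambda>j. Im (quad_form d (t j) v)) sums Im (quad_form d ?S v)"
      using sums_Re sums_Im by blast+
    have "(\<lambda>j. Im (quad_form d (t j) v)) = (\<lambda>j. 0)" using pos v unfolding positive_op_iff_quad_form by auto
    then show "Im (quad_form d ?S v) = 0" using s2 sums_zero sums_unique2 by metis
    show "0 \<le> Re (quad_form d ?S v)"
      using sums_le[OF _ sums_zero s1] pos v unfolding positive_op_iff_quad_form by auto
  qed
  have "(\<lambda>j. mat_trace d (t j)) sums mat_trace d ?S"
    unfolding mat_trace_def by (intro sums_sum esums) auto
  then have s3: "(\<lambda>j. Re (mat_trace d (t j))) sums Re (mat_trace d ?S)" using sums_Re by blast
  show "Re (mat_trace d ?S) \<le> B"
    using suminf_le_const[OF sumtr bd] sums_unique[OF s3] by simp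
qed

definition while_iterate :: "nat \<Rightarrow> nat list \<Rightarrow> complex mat \<Rightarrow> prog \<Rightarrow> complex mat \<Rightarrow> nat \<Rightarrow> complex mat" where
  "while_iterate n qs P S \<rho> i = ((csem S n \<circ> bsem n (Assert qs P)) ^^ i) \<rho>"

definition while_exit :: "nat \<Rightarrow> nat list \<Rightarrow> complex mat \<Rightarrow> prog \<Rightarrow> complex mat \<Rightarrow> nat \<Rightarrow> complex mat" where
  "while_exit n qs P S \<rho> i = bsem n (Assert qs (ortho qs P)) (while_iterate n qs P S \<rho> i)"

lemma csem_While_mat_suminf: "csem (While qs P S) n \<rho> = mat_suminf (qdim n) (while_exit n qs P S \<rho>)"
  unfolding while_exit_def while_iterate_def by simp

context
  fixes n :: nat and qs :: "nat list" and P :: "complex mat" and S :: prog and \<rho> :: "complex mat"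
  assumes body: "trace_nonincreasing (qdim n) (csem S n)"
    and wf: "wf_reg n qs" and P: "is_projector (2 ^ length qs) P" and \<rho>: "positive_op (qdim n) \<rho>"
begin

lemma positive_op_while_iterate: "positive_op (qdim n) (while_iterate n qs P S \<rho> i)"
proof (induction i)
  case 0 then show ?case using \<rho> by (simp add: while_iterate_def)
next
  case (Suc i)
  then show ?case
    using trace_nonincreasingD[OF body positive_op_bsem_Assert[OF P Suc]] by (simp add: while_iterate_def)
qed

lemma positive_op_while_exit: "positive_op (qdim n) (while_exit n qs P S \<rho> j)"
  unfolding while_exit_def by (rule positive_op_bsem_Assert[OF is_projector_ortho[OF P] positive_op_while_iterate])

lemma while_trace_accounting:
  "(\<Sum>j<K. Re (mat_trace (qdim n) (while_exit n qs P S \<rho> j)))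
     + Re (mat_trace (qdim n) (while_iterate n qs P S \<rho> K)) \<le> Re (mat_trace (qdim n) \<rho>)"
proof (induction K)
  case 0 then show ?case by (simp add: while_iterate_def)
next
  case (Suc K)
  let ?d = "qdim n" and ?r = "while_iterate n qs P S \<rho> K"
  have "while_iterate n qs P S \<rho> (Suc K) = csem S n (bsem n (Assert qs P) ?r)"
    by (simp add: while_iterate_def)
  then have "Re (mat_trace ?d (while_iterate n qs P S \<rho> (Suc K))) \<le> Re (mat_trace ?d (bsem n (Assert qs P) ?r))"
    using trace_nonincreasingD[OF body positive_op_bsem_Assert[OF P positive_op_while_iterate]] by simp
  moreover have "Re (mat_trace ?d (bsem n (Assert qs P) ?r)) + Re (mat_trace ?d (while_exit n qs P S \<rho> K)) = Re (mat_trace ?d ?r)"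
    using arg_cong[OF trace_bsem_Assert_ortho[OF wf P positive_op_carrier[OF positive_op_while_iterate]], of Re]
    unfolding while_exit_def by simp
  ultimately show ?case using Suc.IH by simp
qed

lemma while_exit_trace_sum_le:
  "(\<Sum>j<K. Re (mat_trace (qdim n) (while_exit n qs P S \<rho> j))) \<le> Re (mat_trace (qdim n) \<rho>)"
  using while_trace_accounting[of K] mat_trace_nonneg(2)[OF positive_op_while_iterate[of K]] by linarith

end

lemma csem_trace_nonincreasing: "wf_prog n S \<Longrightarrow> trace_nonincreasing (qdim n) (csem S n)"
proof (induction S)
  case (Basic e) then show ?case using bsem_trace_nonincreasing by simp
next
  case (Seq S0 S1)
  then show ?case using trace_nonincreasing_comp[of "qdim n" "csem S0 n" "csem S1 n"] by (simp add: o_def)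
next
  case (If qs P S1 S0)
  have w: "wf_reg n qs" and P: "is_projector (2 ^ length qs) P"
    and IH1: "trace_nonincreasing (qdim n) (csem S1 n)" and IH0: "trace_nonincreasing (qdim n) (csem S0 n)"
    using If by auto
  show ?case unfolding trace_nonincreasing_def
  proof (intro allI impI)
    fix \<rho> assume r: "positive_op (qdim n) \<rho>"
    let ?d = "qdim n" and ?a = "bsem n (Assert qs P) \<rho>" and ?b = "bsem n (Assert qs (ortho qs P)) \<rho>"
    have g1: "positive_op ?d (csem S1 n ?a) \<and> Re (mat_trace ?d (csem S1 n ?a)) \<le> Re (mat_trace ?d ?a)"
      using trace_nonincreasingD[OF IH1 positive_op_bsem_Assert[OF P r]] .
    have g0: "positive_op ?d (csem S0 n ?b) \<and> Re (mat_trace ?d (csem S0 n ?b)) \<le> Re (mat_trace ?d ?b)"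
      using trace_nonincreasingD[OF IH0 positive_op_bsem_Assert[OF is_projector_ortho[OF P] r]] .
    have "mat_trace ?d (csem S1 n ?a + csem S0 n ?b) = mat_trace ?d (csem S1 n ?a) + mat_trace ?d (csem S0 n ?b)"
      using g1 g0 positive_op_carrier mat_trace_add by blast
    moreover have "Re (mat_trace ?d ?a) + Re (mat_trace ?d ?b) = Re (mat_trace ?d \<rho>)"
      using arg_cong[OF trace_bsem_Assert_ortho[OF w P positive_op_carrier[OF r]], of Re] by simp
    ultimately show "positive_op ?d (csem (If qs P S1 S0) n \<rho>) \<and>
        Re (mat_trace ?d (csem (If qs P S1 S0) n \<rho>)) \<le> Re (mat_trace ?d \<rho>)"
      using g1 g0 positive_op_add by simp
  qed
next
  case (While qs P S)
  then have w: "wf_reg n qs" and P: "is_projector (2 ^ length qs) P"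
    and IH: "trace_nonincreasing (qdim n) (csem S n)" by auto
  show ?case unfolding trace_nonincreasing_def csem_While_mat_suminf
    using positive_op_mat_suminf(1,2)[OF positive_op_while_exit while_exit_trace_sum_le, OF IH w P _ IH w P]
    by blast
qed

lemma csem_pdo: "wf_prog n S \<Longrightarrow> \<rho> \<in> pdo n \<Longrightarrow> csem S n \<rho> \<in> pdo n"
  using trace_nonincreasing_pdo csem_trace_nonincreasing by blast

lemma while_body_pdo:
  assumes "wf_prog n (While qs P S)"
  shows "(csem S n \<circ> bsem n (Assert qs P)) ` pdo n \<subseteq> pdo n"
proof (rule image_subsetI)
  fix \<rho> assume "\<rho> \<in> pdo n"
  moreover have "wf_prog n (Seq (Basic (Assert qs P)) S)" using assms by simp
  ultimately have "csem (Seq (Basic (Assert qs P)) S) n \<rho> \<in> pdo n" by (simp only: csem_pdo)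
  then show "(csem S n \<circ> bsem n (Assert qs P)) \<rho> \<in> pdo n" by (simp only: csem.simps)
qed

lemma funpow_image_subset: "f ` D \<subseteq> D \<Longrightarrow> (f ^^ j) ` D \<subseteq> D"
  by (induction j) auto

lemma while_exit_pdo:
  assumes wf: "wf_prog n (While qs P S)" and r: "\<rho> \<in> pdo n"
  shows "while_exit n qs P S \<rho> j \<in> pdo n"
proof -
  have body: "trace_nonincreasing (qdim n) (csem S n)" and w: "wf_reg n qs"
    and P: "is_projector (2 ^ length qs) P" using wf csem_trace_nonincreasing by auto
  have rp: "positive_op (qdim n) \<rho>" and r1: "Re (mat_trace (qdim n) \<rho>) \<le> 1"
    using r unfolding pdo_iff_trace by auto
  have "Re (mat_trace (qdim n) (while_exit n qs P S \<rho> j))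
      \<le> (\<Sum>i<Suc j. Re (mat_trace (qdim n) (while_exit n qs P S \<rho> i)))"
    by (rule member_le_sum) (use mat_trace_nonneg(2)[OF positive_op_while_exit[OF body w P rp]] in auto)
  then show ?thesis unfolding pdo_iff_trace
    using positive_op_while_exit[OF body w P rp] while_exit_trace_sum_le[OF body w P rp, of "Suc j"] r1
    by auto
qed

lemma while_exit_has_sum:
  assumes wf: "wf_prog n (While qs P S)" and r: "\<rho> \<in> pdo n" and rc: "r < qdim n" "c < qdim n"
  shows "((\<lambda>j. while_exit n qs P S \<rho> j $$ (r, c)) has_sum csem (While qs P S) n \<rho> $$ (r, c)) UNIV"
proof -
  have body: "trace_nonincreasing (qdim n) (csem S n)" and w: "wf_reg n qs"
    and P: "is_projector (2 ^ length qs) P" using wf csem_trace_nonincreasing by auto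
  have rp: "positive_op (qdim n) \<rho>" using r unfolding pdo_iff_trace by auto
  show ?thesis unfolding csem_While_mat_suminf
    by (rule positive_op_mat_suminf(3)[OF positive_op_while_exit[OF body w P rp]
          while_exit_trace_sum_le[OF body w P rp] rc])
qed

section \<open>Abstract semantics\<close>

lemma mono_asem:
  assumes mono_ab: "\<forall>e. wf_bcmd n e \<longrightarrow> mono (ab e)"
  shows "wf_prog n S \<Longrightarrow> mono (asem ab S)"
proof (induction S)
  case (Basic e) then show ?case using mono_ab by simp
next
  case (Seq S0 S1)
  then have "mono (asem ab S1 \<circ> asem ab S0)"
    by (auto intro: monotone_on_o)
  then show ?case by (simp add: o_def)
next
  case (If qs P S1 S0)
  then have then_mono: "mono (asem ab S1 \<circ> ab (Assert qs P))"
    and else_mono: "mono (asem ab S0 \<circ> ab (Assert qs (ortho qs P)))"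
    using mono_ab is_projector_ortho by (auto intro: monotone_on_o)
  show ?case
  proof (rule monoI)
    fix a b :: 'a assume "a \<le> b"
    then show "asem ab (If qs P S1 S0) a \<le> asem ab (If qs P S1 S0) b"
      using sup_mono[OF monoD[OF then_mono] monoD[OF else_mono]] by simp
  qed
next
  case (While qs P S)
  then have body: "mono (asem ab S \<circ> ab (Assert qs P))"
    and exit: "mono (ab (Assert qs (ortho qs P)))" and skip: "mono (ab Skip)"
    using mono_ab is_projector_ortho by (auto intro: monotone_on_o)
  have iterate: "mono (if i = 0 then ab Skip else (asem ab S \<circ> ab (Assert qs P)) ^^ i)" for i
    using skip mono_pow[OF body] by simp
  show ?case
  proof (rule monoI)
    fix a b :: 'a assume "a \<le> b"
    then show "asem ab (While qs P S) a \<le> asem ab (While qs P S) b"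
      unfolding asem.simps by (intro SUP_mono' monoD[OF exit] monoD[OF iterate])
  qed
qed

text \<open>Soundness and completeness are proved by one induction, taking for r the order (resp.
  equality) of the abstract domain.\<close>

definition abstracts ::
  "'c set \<Rightarrow> ('a \<Rightarrow> 'a \<Rightarrow> bool) \<Rightarrow> ('c set \<Rightarrow> 'a) \<Rightarrow> ('c \<Rightarrow> 'c) \<Rightarrow> ('a \<Rightarrow> 'a) \<Rightarrow> bool" where
  "abstracts D r \<alpha> f fa \<longleftrightarrow> (\<forall>R. R \<subseteq> D \<longrightarrow> r (\<alpha> (f ` R)) (fa (\<alpha> R)))"

lemma abstractsD: "abstracts D r \<alpha> f fa \<Longrightarrow> R \<subseteq> D \<Longrightarrow> r (\<alpha> (f ` R)) (fa (\<alpha> R))"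
  unfolding abstracts_def by blast

lemma sound_abs_iff_abstracts: "sound_abs n \<alpha> f fa \<longleftrightarrow> abstracts (pdo n) (\<le>) \<alpha> f fa"
  unfolding sound_abs_def abstracts_def ..

lemma complete_abs_iff_abstracts: "complete_abs n \<alpha> f fa \<longleftrightarrow> abstracts (pdo n) (=) \<alpha> f fa"
  unfolding complete_abs_def abstracts_def ..

context
  fixes r :: "'a::complete_lattice \<Rightarrow> 'a \<Rightarrow> bool"
  assumes le_or_eq: "r = (\<le>) \<or> r = (=)"
begin

lemma le_or_eq_refl: "r a a"
  using le_or_eq by auto

lemma le_or_eq_trans: "r a b \<Longrightarrow> r b c \<Longrightarrow> r a c"
  using le_or_eq by auto

lemma le_or_eq_mono: "mono f \<Longrightarrow> r a b \<Longrightarrow> r (f a) (f b)"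
  using le_or_eq by (auto dest: monoD)

lemma le_or_eq_sup: "r a c \<Longrightarrow> r b d \<Longrightarrow> r (sup a b) (sup c d)"
  using le_or_eq by (auto intro: sup_mono)

lemma le_or_eq_SUP: "(\<And>i. r (A i) (B i)) \<Longrightarrow> r (SUP i. A i) (SUP i. B i)"
  using le_or_eq by (auto intro: SUP_mono')

lemma abstracts_comp:
  assumes "abstracts D r \<alpha> f fa" "abstracts D r \<alpha> g ga" "f ` D \<subseteq> D" "mono ga"
  shows "abstracts D r \<alpha> (g \<circ> f) (ga \<circ> fa)"
  unfolding abstracts_def
proof (intro allI impI)
  fix R assume R: "R \<subseteq> D"
  have "f ` R \<subseteq> D" using assms(3) R by blast
  then have "r (\<alpha> (g ` f ` R)) (ga (\<alpha> (f ` R)))"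
    by (rule abstractsD[OF assms(2)])
  moreover have "r (ga (\<alpha> (f ` R))) (ga (fa (\<alpha> R)))"
    by (rule le_or_eq_mono[OF assms(4) abstractsD[OF assms(1) R]])
  ultimately have "r (\<alpha> (g ` f ` R)) (ga (fa (\<alpha> R)))"
    by (rule le_or_eq_trans)
  then show "r (\<alpha> ((g \<circ> f) ` R)) ((ga \<circ> fa) (\<alpha> R))"
    by (simp add: image_comp)
qed

lemma abstracts_funpow:
  assumes "abstracts D r \<alpha> f fa" "f ` D \<subseteq> D" "mono fa"
  shows "abstracts D r \<alpha> (f ^^ j) (fa ^^ j)"
proof (induction j)
  case 0 then show ?case by (simp add: abstracts_def le_or_eq_refl)
next
  case (Suc j)
  show ?case
    using abstracts_comp[OF assms(1) Suc assms(2) mono_pow[OF assms(3)]]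
    by (simp only: funpow_Suc_right)
qed

end

context
  fixes n :: nat and \<alpha> :: "complex mat set \<Rightarrow> 'a::complete_lattice" and \<gamma> :: "'a \<Rightarrow> complex mat set"
  assumes ws: "well_structured n \<alpha> \<gamma>"
begin

lemma alpha_mono: "R \<subseteq> R' \<Longrightarrow> R' \<subseteq> pdo n \<Longrightarrow> \<alpha> R \<le> \<alpha> R'"
proof -
  have "\<forall>R R'. R \<subseteq> R' \<and> R' \<subseteq> pdo n \<longrightarrow> \<alpha> R \<le> \<alpha> R'"
    using ws unfolding well_structured_def by (rule conjunct1)
  then show "R \<subseteq> R' \<Longrightarrow> R' \<subseteq> pdo n \<Longrightarrow> \<alpha> R \<le> \<alpha> R'" by blast
qed

lemma alpha_le_iff: "R \<subseteq> pdo n \<Longrightarrow> \<alpha> R \<le> a \<longleftrightarrow> R \<subseteq> \<gamma> a"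
proof -
  have "\<forall>R a. R \<subseteq> pdo n \<longrightarrow> (R \<subseteq> \<gamma> a \<longleftrightarrow> \<alpha> R \<le> a)"
    using ws unfolding well_structured_def by (elim conjE)
  then show "R \<subseteq> pdo n \<Longrightarrow> \<alpha> R \<le> a \<longleftrightarrow> R \<subseteq> \<gamma> a" by blast
qed

lemma alpha_has_sum:
  fixes I :: "nat set" and t :: "nat \<Rightarrow> complex mat"
  assumes "I \<noteq> {}" "\<And>i. i \<in> I \<Longrightarrow> t i \<in> pdo n" "S \<in> pdo n"
    and "\<And>r c. r < qdim n \<Longrightarrow> c < qdim n \<Longrightarrow> ((\<lambda>i. t i $$ (r, c)) has_sum S $$ (r, c)) I"
  shows "\<alpha> {S} = (SUP i\<in>I. \<alpha> {t i})"
proof -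
  have "\<forall>(I :: nat set) (\<rho> :: nat \<Rightarrow> complex mat) (x :: nat \<Rightarrow> real) S.
        I \<noteq> {} \<and> (\<forall>i\<in>I. \<rho> i \<in> pdo n \<and> x i > 0) \<and> S \<in> pdo n \<and>
        (\<forall>r<qdim n. \<forall>c<qdim n. ((\<lambda>i. complex_of_real (x i) * \<rho> i $$ (r, c)) has_sum S $$ (r, c)) I)
        \<longrightarrow> \<alpha> {S} = (SUP i\<in>I. \<alpha> {\<rho> i})"
    using ws unfolding well_structured_def by (elim conjE)
  from this[rule_format, of I t "\<lambda>_. 1" S] show ?thesis using assms by auto
qed

lemma alpha_UNION:
  assumes "\<And>i. i \<in> I \<Longrightarrow> R i \<subseteq> pdo n"
  shows "\<alpha> (\<Union>i\<in>I. R i) = (SUP i\<in>I. \<alpha> (R i))"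
proof (rule antisym)
  have U: "(\<Union>i\<in>I. R i) \<subseteq> pdo n" using assms by auto
  have "R i \<subseteq> \<gamma> (SUP i\<in>I. \<alpha> (R i))" if "i \<in> I" for i
    unfolding alpha_le_iff[OF assms[OF that], symmetric] by (rule SUP_upper[OF that])
  then show "\<alpha> (\<Union>i\<in>I. R i) \<le> (SUP i\<in>I. \<alpha> (R i))"
    unfolding alpha_le_iff[OF U] by (rule UN_least)
  show "(SUP i\<in>I. \<alpha> (R i)) \<le> \<alpha> (\<Union>i\<in>I. R i)"
    by (rule SUP_least, rule alpha_mono[OF _ U]) auto
qed

lemma alpha_image:
  assumes "f ` R \<subseteq> pdo n"
  shows "\<alpha> (f ` R) = (SUP x\<in>R. \<alpha> {f x})"
proof -
  have "\<alpha> (\<Union>x\<in>R. {f x}) = (SUP x\<in>R. \<alpha> {f x})"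
    using assms by (intro alpha_UNION) auto
  then show ?thesis by (simp add: UNION_singleton_eq_range)
qed

lemma alpha_add:
  assumes A: "A \<in> pdo n" and B: "B \<in> pdo n" and AB: "A + B \<in> pdo n"
  shows "\<alpha> {A + B} = sup (\<alpha> {A}) (\<alpha> {B})"
proof -
  define t where "t = (\<lambda>i::nat. if i = 0 then A else B)"
  have Ac: "A \<in> carrier_mat (qdim n) (qdim n)" and Bc: "B \<in> carrier_mat (qdim n) (qdim n)"
    using A B positive_op_carrier unfolding pdo_iff_trace by auto
  have "((\<lambda>i. t i $$ (r, c)) has_sum (A + B) $$ (r, c)) {0, 1}"
    if "r < qdim n" "c < qdim n" for r c
    by (rule has_sum_finiteI) (use Ac Bc that in \<open>simp_all add: t_def\<close>)
  then have "\<alpha> {A + B} = (SUP i\<in>{0, 1}. \<alpha> {t i})"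
    by (intro alpha_has_sum) (use A B AB in \<open>auto simp: t_def\<close>)
  then show ?thesis by (simp add: t_def)
qed

lemma alpha_csem_If:
  assumes wf: "wf_prog n (If qs P S1 S0)" and R: "R \<subseteq> pdo n"
  shows "\<alpha> (csem (If qs P S1 S0) n ` R) =
    sup (\<alpha> ((csem S1 n \<circ> bsem n (Assert qs P)) ` R))
        (\<alpha> ((csem S0 n \<circ> bsem n (Assert qs (ortho qs P))) ` R))"
proof -
  let ?A = "csem (Seq (Basic (Assert qs P)) S1) n" and ?B = "csem (Seq (Basic (Assert qs (ortho qs P))) S0) n"
  have wA: "wf_prog n (Seq (Basic (Assert qs P)) S1)" and wB: "wf_prog n (Seq (Basic (Assert qs (ortho qs P))) S0)"
    using wf is_projector_ortho by auto
  have If: "csem (If qs P S1 S0) n \<rho> = ?A \<rho> + ?B \<rho>" for \<rho> by simp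
  have "\<alpha> (csem (If qs P S1 S0) n ` R) = (SUP \<rho>\<in>R. \<alpha> {csem (If qs P S1 S0) n \<rho>})"
    by (rule alpha_image) (use csem_pdo[OF wf] R in blast)
  also have "\<dots> = (SUP \<rho>\<in>R. sup (\<alpha> {?A \<rho>}) (\<alpha> {?B \<rho>}))"
  proof (rule SUP_cong[OF refl])
    fix \<rho> assume "\<rho> \<in> R"
    then have r: "\<rho> \<in> pdo n" using R by auto
    show "\<alpha> {csem (If qs P S1 S0) n \<rho>} = sup (\<alpha> {?A \<rho>}) (\<alpha> {?B \<rho>})"
      unfolding If by (rule alpha_add) (use csem_pdo[OF wA r] csem_pdo[OF wB r] csem_pdo[OF wf r] If in auto)
  qed
  also have "\<dots> = sup (SUP \<rho>\<in>R. \<alpha> {?A \<rho>}) (SUP \<rho>\<in>R. \<alpha> {?B \<rho>})"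
    by (rule Complete_Lattices.SUP_sup_distrib[symmetric])
  also have "\<dots> = sup (\<alpha> (?A ` R)) (\<alpha> (?B ` R))"
  proof -
    have "\<alpha> (?A ` R) = (SUP \<rho>\<in>R. \<alpha> {?A \<rho>})" "\<alpha> (?B ` R) = (SUP \<rho>\<in>R. \<alpha> {?B \<rho>})"
      using csem_pdo[OF wA] csem_pdo[OF wB] R by (auto intro!: alpha_image)
    then show ?thesis by (simp only:)
  qed
  finally show ?thesis by simp
qed

lemma alpha_csem_While:
  assumes wf: "wf_prog n (While qs P S)" and R: "R \<subseteq> pdo n"
  shows "\<alpha> (csem (While qs P S) n ` R) =
    (SUP j. \<alpha> ((bsem n (Assert qs (ortho qs P)) \<circ> (csem S n \<circ> bsem n (Assert qs P)) ^^ j) ` R))"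
proof -
  have exit_pdo: "\<And>\<rho> j. \<rho> \<in> R \<Longrightarrow> while_exit n qs P S \<rho> j \<in> pdo n"
    using while_exit_pdo[OF wf] R by blast
  have "\<alpha> (csem (While qs P S) n ` R) = (SUP \<rho>\<in>R. \<alpha> {csem (While qs P S) n \<rho>})"
    by (rule alpha_image) (use csem_pdo[OF wf] R in blast)
  also have "\<dots> = (SUP \<rho>\<in>R. SUP j. \<alpha> {while_exit n qs P S \<rho> j})"
  proof (rule SUP_cong[OF refl])
    fix \<rho> assume "\<rho> \<in> R"
    then show "\<alpha> {csem (While qs P S) n \<rho>} = (SUP j. \<alpha> {while_exit n qs P S \<rho> j})"
      using R exit_pdo csem_pdo[OF wf] while_exit_has_sum[OF wf]
      by (intro alpha_has_sum) auto
  qed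
  also have "\<dots> = (SUP j. SUP \<rho>\<in>R. \<alpha> {while_exit n qs P S \<rho> j})"
    by (rule SUP_commute)
  also have "\<dots> = (SUP j. \<alpha> ((\<lambda>\<rho>. while_exit n qs P S \<rho> j) ` R))"
    using alpha_image[of "\<lambda>\<rho>. while_exit n qs P S \<rho> _" R] exit_pdo by (simp add: image_subset_iff)
  finally show ?thesis by (simp add: while_exit_def while_iterate_def o_def)
qed

end

context
  fixes n :: nat and \<alpha> :: "complex mat set \<Rightarrow> 'a::complete_lattice" and \<gamma> :: "'a \<Rightarrow> complex mat set"
    and ab :: "bcmd \<Rightarrow> 'a \<Rightarrow> 'a" and r :: "'a \<Rightarrow> 'a \<Rightarrow> bool"
  assumes ws: "well_structured n \<alpha> \<gamma>" and mono_ab: "\<forall>e. wf_bcmd n e \<longrightarrow> mono (ab e)"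
    and le_or_eq: "r = (\<le>) \<or> r = (=)"
    and basic: "\<forall>e. wf_bcmd n e \<longrightarrow> abstracts (pdo n) r \<alpha> (bsem n e) (ab e)"
begin

lemma abstracts_Assert_comp:
  assumes "wf_prog n S" "wf_bcmd n (Assert qs P)" "abstracts (pdo n) r \<alpha> (csem S n) (asem ab S)"
  shows "abstracts (pdo n) r \<alpha> (csem S n \<circ> bsem n (Assert qs P)) (asem ab S \<circ> ab (Assert qs P))"
proof (rule abstracts_comp[OF le_or_eq _ assms(3)])
  show "abstracts (pdo n) r \<alpha> (bsem n (Assert qs P)) (ab (Assert qs P))"
    using basic assms(2) by blast
  show "bsem n (Assert qs P) ` pdo n \<subseteq> pdo n"
    using trace_nonincreasing_pdo[OF bsem_trace_nonincreasing[OF assms(2)]] by blast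
  show "mono (asem ab S)"
    by (rule mono_asem[OF mono_ab assms(1)])
qed

lemma abstracts_csem_If:
  assumes wf: "wf_prog n (If qs P S1 S0)"
    and IH1: "abstracts (pdo n) r \<alpha> (csem S1 n) (asem ab S1)"
    and IH0: "abstracts (pdo n) r \<alpha> (csem S0 n) (asem ab S0)"
  shows "abstracts (pdo n) r \<alpha> (csem (If qs P S1 S0) n) (asem ab (If qs P S1 S0))"
  unfolding abstracts_def
proof (intro allI impI)
  fix R assume R: "R \<subseteq> pdo n"
  have "wf_prog n S1" "wf_prog n S0" "wf_bcmd n (Assert qs P)" "wf_bcmd n (Assert qs (ortho qs P))"
    using wf is_projector_ortho by auto
  then have then_branch: "abstracts (pdo n) r \<alpha> (csem S1 n \<circ> bsem n (Assert qs P)) (asem ab S1 \<circ> ab (Assert qs P))"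
    and else_branch: "abstracts (pdo n) r \<alpha> (csem S0 n \<circ> bsem n (Assert qs (ortho qs P)))
      (asem ab S0 \<circ> ab (Assert qs (ortho qs P)))"
    using IH1 IH0 by (blast intro: abstracts_Assert_comp)+
  have "r (sup (\<alpha> ((csem S1 n \<circ> bsem n (Assert qs P)) ` R))
               (\<alpha> ((csem S0 n \<circ> bsem n (Assert qs (ortho qs P))) ` R)))
          (sup ((asem ab S1 \<circ> ab (Assert qs P)) (\<alpha> R))
               ((asem ab S0 \<circ> ab (Assert qs (ortho qs P))) (\<alpha> R)))"
    by (rule le_or_eq_sup[OF le_or_eq abstractsD[OF then_branch R] abstractsD[OF else_branch R]])
  then show "r (\<alpha> (csem (If qs P S1 S0) n ` R)) (asem ab (If qs P S1 S0) (\<alpha> R))"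
    unfolding alpha_csem_If[OF ws wf R] by simp
qed

lemma abstracts_while_iterate:
  assumes wf: "wf_prog n (While qs P S)" and IH: "abstracts (pdo n) r \<alpha> (csem S n) (asem ab S)"
  shows "abstracts (pdo n) r \<alpha> ((csem S n \<circ> bsem n (Assert qs P)) ^^ j)
    (if j = 0 then ab Skip else (asem ab S \<circ> ab (Assert qs P)) ^^ j)"
proof (cases "j = 0")
  case True
  have "bsem n Skip = id" by (rule ext) simp
  then show ?thesis using True basic[rule_format, of Skip] by simp
next
  case False
  let ?T = "csem S n \<circ> bsem n (Assert qs P)" and ?F = "asem ab S \<circ> ab (Assert qs P)"
  have "wf_prog n S" "wf_bcmd n (Assert qs P)" using wf by auto
  then have body: "abstracts (pdo n) r \<alpha> ?T ?F"
    using IH by (rule abstracts_Assert_comp)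
  have "mono (asem ab (Seq (Basic (Assert qs P)) S))"
    using wf by (intro mono_asem[OF mono_ab]) simp
  then have "mono ?F" by (simp only: asem.simps)
  then show ?thesis
    using False abstracts_funpow[OF le_or_eq body while_body_pdo[OF wf]] by simp
qed

lemma abstracts_csem_While:
  assumes wf: "wf_prog n (While qs P S)" and IH: "abstracts (pdo n) r \<alpha> (csem S n) (asem ab S)"
  shows "abstracts (pdo n) r \<alpha> (csem (While qs P S) n) (asem ab (While qs P S))"
  unfolding abstracts_def
proof (intro allI impI)
  fix R assume R: "R \<subseteq> pdo n"
  let ?T = "csem S n \<circ> bsem n (Assert qs P)"
  let ?E = "bsem n (Assert qs (ortho qs P))"
    and ?F = "\<lambda>j. ab (Assert qs (ortho qs P)) \<circ> (if j = 0 then ab Skip else (asem ab S \<circ> ab (Assert qs P)) ^^ j)"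
  have terms: "abstracts (pdo n) r \<alpha> (?E \<circ> ?T ^^ j) (?F j)" for j
  proof (rule abstracts_comp[OF le_or_eq abstracts_while_iterate[OF wf IH]])
    have "wf_bcmd n (Assert qs (ortho qs P))" using wf is_projector_ortho by simp
    then show "abstracts (pdo n) r \<alpha> ?E (ab (Assert qs (ortho qs P)))"
      and "mono (ab (Assert qs (ortho qs P)))" using basic mono_ab by blast+
  qed (rule funpow_image_subset[OF while_body_pdo[OF wf]])
  have "r (SUP j. \<alpha> ((?E \<circ> ?T ^^ j) ` R))
      (SUP j. ab (Assert qs (ortho qs P)) ((if j = 0 then ab Skip else (asem ab S \<circ> ab (Assert qs P)) ^^ j) (\<alpha> R)))"
    using abstractsD[OF terms R] by (intro le_or_eq_SUP[OF le_or_eq]) (simp only: comp_apply)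
  then show "r (\<alpha> (csem (While qs P S) n ` R)) (asem ab (While qs P S) (\<alpha> R))"
    unfolding alpha_csem_While[OF ws wf R] asem.simps .
qed

lemma abstracts_csem: "wf_prog n S \<Longrightarrow> abstracts (pdo n) r \<alpha> (csem S n) (asem ab S)"
proof (induction S)
  case (Basic e) then show ?case using basic by simp
next
  case (Seq S0 S1)
  then have "abstracts (pdo n) r \<alpha> (csem S1 n \<circ> csem S0 n) (asem ab S1 \<circ> asem ab S0)"
    using csem_pdo[of n S0] by (intro abstracts_comp[OF le_or_eq] mono_asem[OF mono_ab]) auto
  then show ?case by (simp add: comp_def)
next
  case (If qs P S1 S0)
  then show ?case using abstracts_csem_If by simp
next
  case (While qs P S)
  then show ?case using abstracts_csem_While by simp
qed

end

theorem mainTheorem5: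
  fixes n :: nat
    and \<alpha> :: "complex mat set \<Rightarrow> 'a::complete_lattice"
    and \<gamma> :: "'a \<Rightarrow> complex mat set"
    and ab :: "bcmd \<Rightarrow> 'a \<Rightarrow> 'a"
  assumes ws: "well_structured n \<alpha> \<gamma>"
    and mono_ab: "\<forall>e. wf_bcmd n e \<longrightarrow> mono (ab e)"
  shows "((\<forall>e. wf_bcmd n e \<longrightarrow> sound_abs n \<alpha> (bsem n e) (ab e)) \<longrightarrow>
           (\<forall>S. wf_prog n S \<longrightarrow> sound_abs n \<alpha> (csem S n) (asem ab S))) \<and>
         ((\<forall>e. wf_bcmd n e \<longrightarrow> complete_abs n \<alpha> (bsem n e) (ab e)) \<longrightarrow>
           (\<forall>S. wf_prog n S \<longrightarrow> complete_abs n \<alpha> (csem S n) (asem ab S)))"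
  unfolding sound_abs_iff_abstracts complete_abs_iff_abstracts
  using abstracts_csem[OF ws mono_ab] by blast

end
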